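(* In $(\lambda^2\beta\eta\pi* )'$, let $\varphi$ be a type, $\vec X=X_1,\ldots,X_m$ distinct type variables containing all free type variables of $\varphi$, $\vec\psi=\psi_1,\ldots,\psi_m$ types, and $\vec{\mathcal R}=\mathcal R_1,\ldots,\mathcal R_m$ RCs of types $\psi_1,\ldots,\psi_m$ respectively. Then $\mathsf{RED}_\varphi[\vec X:=\vec{\mathcal R}]$ is an RC of type $\varphi[\vec X:=\vec\psi]$.
   Context: System $(\lambda^2\beta\eta\pi* )'$. Types are generated from type variables $X,Y,\ldots$ and a type constant $\top$ by $\varphi\times\psi$, $\varphi\to\psi$ and $\forall X.\varphi$. Terms are Church-style typed: the constant $*^\top$, variables $x^\varphi$, $\lambda x^\varphi.t$, application $uv$, pairs $\langle u,v\rangle$, projections $\pi_1t,\pi_2t$, universal abstraction $(\Lambda X.v^\varphi)^{\forall X.\varphi}$ (allowed only when $X$ is not free in the type of any free variable of $v$), and universal application $(t^{\forall X.\varphi}\psi)^{\varphi[X:=\psi]}$. Terms are identified up to renaming of bound variables ($\equiv$); $\mathrm{FV}$, $\mathrm{FTV}$ denote free term / type variables. $\mathit{Iso}(\top)$ is the least set of types with $\top\in\mathit{Iso}(\top)$, $\varphi\to\tau$, $\forall X.\tau\in\mathit{Iso}(\top)$ if $\tau\in\mathit{Iso}(\top)$, $\tau_1\times\tau_2\in\mathit{Iso}(\top)$ if $\tau_1,\tau_2\in\mathit{Iso}(\top)$. For $\tau\in\mathit{Iso}(\top)$: $*^\top$ is the constant, $*^{\varphi\to\tau}:=\lambda x^\varphi.*^\tau$,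 $*^{\tau_1\times\tau_2}:=\langle *^{\tau_1},*^{\tau_2}\rangle$, $*^{\forall X.\tau}:=\Lambda X.*^\tau$. The one-step relation $\to$ is the closure under all contexts of: $(\beta)$ $(\lambda x.u)v\to u[x:=v]$; $\pi_1\langle u,v\rangle\to u$, $\pi_2\langle u,v\rangle\to v$; $(\eta)$ $\lambda x.tx\to t$ ($x\notin\mathrm{FV}(t)$); $(SP)$ $\langle\pi_1u,\pi_2u\rangle\to u$; (gentop) $u^\tau\to *^\tau$ ($\tau\in\mathit{Iso}(\top)$, $u\not\equiv *^\tau$); $(\eta_{top})$ $\lambda x^\tau.t\,*^\tau\to t$ ($x\notin\mathrm{FV}(t)$, $\tau\in\mathit{Iso}(\top)$); $\langle\pi_1u,*^\tau\rangle\to u$ ($u:\varphi\times\tau$, $\tau\in\mathit{Iso}(\top)$); $\langle *^\tau,\pi_2u\rangle\to u$ ($u:\tau\times\psi$, $\tau\in\mathit{Iso}(\top)$); $(\beta^2)$ $(\Lambda X.t)\varphi\to t[X:=\varphi]$; $(\eta^2)$ $\Lambda X.sX\to s$ ($X\notin\mathrm{FTV}(s)$). A term is SN if no infinite $\to$-sequence starts from it; $\mathcal{SN}^\psi$ is the set of SN terms of type $\psi$. A term is neutral if it is not of the form $\langle u,v\rangle$, $\lambda x.v$ or $\Lambda X.u$. For a term $t$ and a variable $z^\top$, $t[*^\top:=z^\top]$ replaces every occurrence of the constant $*^\top$ in $t$ by $z^\top$; a set $A$ of terms is variant-closed if $t[*^\top:=z^\top]\in A$ for every $t\in A$ and every variable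 $z^\top$ not occurring in $t$. A reducibility candidate (RC) of type $\varphi$ is a set $\mathcal{R}$ of terms of type $\varphi$ such that: (CR0) if $\varphi\in\mathit{Iso}(\top)$ then $*^\varphi\in\mathcal{R}$, and $\mathcal{R}$ is variant-closed; (CR1) every $t\in\mathcal{R}$ is SN; (CR2) $t\in\mathcal{R}$, $t\to t'$ imply $t'\in\mathcal{R}$; (CR3) if $t$ of type $\varphi$ is neutral and every one-step reduct of $t$ is in $\mathcal{R}$, then $t\in\mathcal{R}$. For RCs $\mathcal{R}_i$ of type $\varphi_i$: $\mathcal{R}_1\times\mathcal{R}_2=\{t^{\varphi_1\times\varphi_2}\mid \pi_it\in\mathcal{R}_i, i=1,2\}$ and $\mathcal{R}_1\to\mathcal{R}_2=\{t^{\varphi_1\to\varphi_2}\mid \forall u\in\mathcal{R}_1,\ tu\in\mathcal{R}_2\}$. Given a type $\varphi$, distinct type variables $\vec X=X_1,\ldots,X_m$ containing the free type variables of $\varphi$, types $\vec\psi=\psi_1,\ldots,\psi_m$ and RCs $\vec{\mathcal{R}}=\mathcal{R}_1,\ldots,\mathcal{R}_m$ of types $\vec\psi$, the set $\mathsf{RED}_\varphi[\vec X:=\vec{\mathcal{R}}]$ of terms of type $\varphi[\vec X:=\vec\psi]$ is defined by induction on $\varphi$: $\mathsf{RED}_\top[\vec X:=\vec{\mathcal R}]=\mathcal{SN}^\top$; $\mathsf{RED}_{X_i}[\vec X:=\vec{\mathcal R}]=\mathcal{R}_i$; $\mathsf{RED}_{\varphi'\circ\varphi''}[\vec X:=\vec{\mathcal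 R}]=\mathsf{RED}_{\varphi'}[\vec X:=\vec{\mathcal R}]\circ\mathsf{RED}_{\varphi''}[\vec X:=\vec{\mathcal R}]$ for $\circ\in\{\to,\times\}$; for $\varphi=\forall Y.\varphi'$ (with $Y$ distinct from all $X_i$ and not free in $\vec\psi$), $\mathsf{RED}_\varphi[\vec X:=\vec{\mathcal R}]$ is the set of terms $t$ of type $(\forall Y.\varphi')[\vec X:=\vec\psi]$ such that for every type $\psi$ and every RC $\mathcal{S}$ of type $\psi$, $t\psi\in\mathsf{RED}_{\varphi'}[\vec X,Y:=\vec{\mathcal R},\mathcal{S}]$. *)

theory Defs
  imports Main
begin

section \<open>Types (locally nameless: free type variables named, bound ones de Bruijn)\<close>

datatype ty = TFree nat | TBound nat | Top | Prod ty ty | Arr ty ty | All ty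

fun lc_ty_at :: "nat \<Rightarrow> ty \<Rightarrow> bool" where
  "lc_ty_at k (TFree X) = True"
| "lc_ty_at k (TBound i) = (i < k)"
| "lc_ty_at k Top = True"
| "lc_ty_at k (Prod a b) = (lc_ty_at k a \<and> lc_ty_at k b)"
| "lc_ty_at k (Arr a b) = (lc_ty_at k a \<and> lc_ty_at k b)"
| "lc_ty_at k (All a) = lc_ty_at (Suc k) a"

abbreviation is_type :: "ty \<Rightarrow> bool" where "is_type a \<equiv> lc_ty_at 0 a"

fun ftv :: "ty \<Rightarrow> nat set" where
  "ftv (TFree X) = {X}"
| "ftv (TBound i) = {}"
| "ftv Top = {}"
| "ftv (Prod a b) = ftv a \<union> ftv b"
| "ftv (Arr a b) = ftv a \<union> ftv b"
| "ftv (All a) = ftv a"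

fun topen_at :: "nat \<Rightarrow> ty \<Rightarrow> ty \<Rightarrow> ty" where
  "topen_at k U (TFree X) = TFree X"
| "topen_at k U (TBound i) = (if i = k then U else TBound i)"
| "topen_at k U Top = Top"
| "topen_at k U (Prod a b) = Prod (topen_at k U a) (topen_at k U b)"
| "topen_at k U (Arr a b) = Arr (topen_at k U a) (topen_at k U b)"
| "topen_at k U (All a) = All (topen_at (Suc k) U a)"

text \<open>Substitution for free type variables (applied to locally closed types).\<close>
fun tsubst :: "(nat \<Rightarrow> ty option) \<Rightarrow> ty \<Rightarrow> ty" where
  "tsubst s (TFree X) = (case s X of None \<Rightarrow> TFree X | Some a \<Rightarrow> a)"
| "tsubst s (TBound i) = TBound i"
| "tsubst s Top = Top"
| "tsubst s (Prod a b) = Prod (tsubst s a) (tsubst s b)"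
| "tsubst s (Arr a b) = Arr (tsubst s a) (tsubst s b)"
| "tsubst s (All a) = All (tsubst s a)"

definition simsubst :: "nat list \<Rightarrow> ty list \<Rightarrow> ty \<Rightarrow> ty" where
  "simsubst Xs ps a = tsubst (map_of (zip Xs ps)) a"

fun iso :: "ty \<Rightarrow> bool" where
  "iso Top = True"
| "iso (Arr a t) = iso t"
| "iso (Prod a b) = (iso a \<and> iso b)"
| "iso (All t) = iso t"
| "iso (TFree X) = False"
| "iso (TBound i) = False"

section \<open>Church-style terms (locally nameless)\<close>

text \<open>FVar x a is the free variable x^a; BVar are de Bruijn indices for term binders;
  type annotations use TBound for type variables bound by enclosing TLam.\<close>
datatype tm = Star | FVar nat ty | BVar nat | Lam ty tm | App tm tm | Pair tm tm
  | Proj1 tm | Proj2 tm | TLam tm | TApp tm ty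

fun star_of :: "ty \<Rightarrow> tm" where
  "star_of Top = Star"
| "star_of (Arr a t) = Lam a (star_of t)"
| "star_of (Prod a b) = Pair (star_of a) (star_of b)"
| "star_of (All t) = TLam (star_of t)"
| "star_of (TFree X) = Star"
| "star_of (TBound i) = Star"

fun opn :: "nat \<Rightarrow> tm \<Rightarrow> tm \<Rightarrow> tm" where
  "opn k u Star = Star"
| "opn k u (FVar x a) = FVar x a"
| "opn k u (BVar i) = (if i = k then u else BVar i)"
| "opn k u (Lam a t) = Lam a (opn (Suc k) u t)"
| "opn k u (App t s) = App (opn k u t) (opn k u s)"
| "opn k u (Pair t s) = Pair (opn k u t) (opn k u s)"
| "opn k u (Proj1 t) = Proj1 (opn k u t)"
| "opn k u (Proj2 t) = Proj2 (opn k u t)"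
| "opn k u (TLam t) = TLam (opn k u t)"
| "opn k u (TApp t a) = TApp (opn k u t) a"

text \<open>Opening a type binder inside a term (annotations of free variables are untouched:
  they must be closed types).\<close>
fun topn :: "nat \<Rightarrow> ty \<Rightarrow> tm \<Rightarrow> tm" where
  "topn k U Star = Star"
| "topn k U (FVar x a) = FVar x a"
| "topn k U (BVar i) = BVar i"
| "topn k U (Lam a t) = Lam (topen_at k U a) (topn k U t)"
| "topn k U (App t s) = App (topn k U t) (topn k U s)"
| "topn k U (Pair t s) = Pair (topn k U t) (topn k U s)"
| "topn k U (Proj1 t) = Proj1 (topn k U t)"
| "topn k U (Proj2 t) = Proj2 (topn k U t)"
| "topn k U (TLam t) = TLam (topn (Suc k) U t)"
| "topn k U (TApp t a) = TApp (topn k U t) (topen_at k U a)"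

fun fvars :: "tm \<Rightarrow> (nat \<times> ty) set" where
  "fvars Star = {}"
| "fvars (FVar x a) = {(x, a)}"
| "fvars (BVar i) = {}"
| "fvars (Lam a t) = fvars t"
| "fvars (App t s) = fvars t \<union> fvars s"
| "fvars (Pair t s) = fvars t \<union> fvars s"
| "fvars (Proj1 t) = fvars t"
| "fvars (Proj2 t) = fvars t"
| "fvars (TLam t) = fvars t"
| "fvars (TApp t a) = fvars t"

fun ftv_tm :: "tm \<Rightarrow> nat set" where
  "ftv_tm Star = {}"
| "ftv_tm (FVar x a) = ftv a"
| "ftv_tm (BVar i) = {}"
| "ftv_tm (Lam a t) = ftv a \<union> ftv_tm t"
| "ftv_tm (App t s) = ftv_tm t \<union> ftv_tm s"
| "ftv_tm (Pair t s) = ftv_tm t \<union> ftv_tm s"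
| "ftv_tm (Proj1 t) = ftv_tm t"
| "ftv_tm (Proj2 t) = ftv_tm t"
| "ftv_tm (TLam t) = ftv_tm t"
| "ftv_tm (TApp t a) = ftv a \<union> ftv_tm t"

fun bvc_at :: "nat \<Rightarrow> tm \<Rightarrow> bool" where
  "bvc_at k Star = True"
| "bvc_at k (FVar x a) = True"
| "bvc_at k (BVar i) = (i < k)"
| "bvc_at k (Lam a t) = bvc_at (Suc k) t"
| "bvc_at k (App t s) = (bvc_at k t \<and> bvc_at k s)"
| "bvc_at k (Pair t s) = (bvc_at k t \<and> bvc_at k s)"
| "bvc_at k (Proj1 t) = bvc_at k t"
| "bvc_at k (Proj2 t) = bvc_at k t"
| "bvc_at k (TLam t) = bvc_at k t"
| "bvc_at k (TApp t a) = bvc_at k t"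

fun tyc_at :: "nat \<Rightarrow> tm \<Rightarrow> bool" where
  "tyc_at k Star = True"
| "tyc_at k (FVar x a) = lc_ty_at 0 a"
| "tyc_at k (BVar i) = True"
| "tyc_at k (Lam a t) = (lc_ty_at k a \<and> tyc_at k t)"
| "tyc_at k (App t s) = (tyc_at k t \<and> tyc_at k s)"
| "tyc_at k (Pair t s) = (tyc_at k t \<and> tyc_at k s)"
| "tyc_at k (Proj1 t) = tyc_at k t"
| "tyc_at k (Proj2 t) = tyc_at k t"
| "tyc_at k (TLam t) = tyc_at (Suc k) t"
| "tyc_at k (TApp t a) = (lc_ty_at k a \<and> tyc_at k t)"

inductive has_ty :: "tm \<Rightarrow> ty \<Rightarrow> bool" where
  ty_Star: "has_ty Star Top"
| ty_FVar: "is_type a \<Longrightarrow> has_ty (FVar x a) a"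
| ty_Lam: "is_type a \<Longrightarrow> (\<And>x. x \<notin> fst ` fvars t \<Longrightarrow> has_ty (opn 0 (FVar x a) t) b)
           \<Longrightarrow> has_ty (Lam a t) (Arr a b)"
| ty_App: "has_ty t (Arr a b) \<Longrightarrow> has_ty u a \<Longrightarrow> has_ty (App t u) b"
| ty_Pair: "has_ty t a \<Longrightarrow> has_ty u b \<Longrightarrow> has_ty (Pair t u) (Prod a b)"
| ty_Proj1: "has_ty t (Prod a b) \<Longrightarrow> has_ty (Proj1 t) a"
| ty_Proj2: "has_ty t (Prod a b) \<Longrightarrow> has_ty (Proj2 t) b"
| ty_TLam: "(\<And>X. X \<notin> ftv_tm t \<union> ftv b \<Longrightarrow>
              has_ty (topn 0 (TFree X) t) (topen_at 0 (TFree X) b))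
           \<Longrightarrow> has_ty (TLam t) (All b)"
| ty_TApp: "has_ty t (All b) \<Longrightarrow> is_type U \<Longrightarrow> has_ty (TApp t U) (topen_at 0 U b)"

inductive red :: "tm \<Rightarrow> tm \<Rightarrow> bool" where
  beta: "red (App (Lam a t) v) (opn 0 v t)"
| proj1: "red (Proj1 (Pair u v)) u"
| proj2: "red (Proj2 (Pair u v)) v"
| eta: "bvc_at 0 t \<Longrightarrow> red (Lam a (App t (BVar 0))) t"
| SP: "red (Pair (Proj1 u) (Proj2 u)) u"
| gentop: "has_ty u \<tau> \<Longrightarrow> iso \<tau> \<Longrightarrow> u \<noteq> star_of \<tau> \<Longrightarrow> red u (star_of \<tau>)"
| eta_top: "iso \<tau> \<Longrightarrow> bvc_at 0 t \<Longrightarrow> red (Lam \<tau> (App t (star_of \<tau>))) t"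
| pair_top1: "has_ty u (Prod a \<tau>) \<Longrightarrow> iso \<tau> \<Longrightarrow> red (Pair (Proj1 u) (star_of \<tau>)) u"
| pair_top2: "has_ty u (Prod \<tau> b) \<Longrightarrow> iso \<tau> \<Longrightarrow> red (Pair (star_of \<tau>) (Proj2 u)) u"
| beta2: "red (TApp (TLam t) U) (topn 0 U t)"
| eta2: "tyc_at 0 s \<Longrightarrow> red (TLam (TApp s (TBound 0))) s"
| c_Lam: "(\<And>x. x \<notin> fst ` fvars t \<union> fst ` fvars t' \<Longrightarrow>
             red (opn 0 (FVar x a) t) (opn 0 (FVar x a) t')) \<Longrightarrow> red (Lam a t) (Lam a t')"
| c_App1: "red t t' \<Longrightarrow> red (App t u) (App t' u)"
| c_App2: "red u u' \<Longrightarrow> red (App t u) (App t u')"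
| c_Pair1: "red t t' \<Longrightarrow> red (Pair t u) (Pair t' u)"
| c_Pair2: "red u u' \<Longrightarrow> red (Pair t u) (Pair t u')"
| c_Proj1: "red t t' \<Longrightarrow> red (Proj1 t) (Proj1 t')"
| c_Proj2: "red t t' \<Longrightarrow> red (Proj2 t) (Proj2 t')"
| c_TLam: "(\<And>X. X \<notin> ftv_tm t \<union> ftv_tm t' \<Longrightarrow>
             red (topn 0 (TFree X) t) (topn 0 (TFree X) t')) \<Longrightarrow> red (TLam t) (TLam t')"
| c_TApp: "red t t' \<Longrightarrow> red (TApp t U) (TApp t' U)"

definition SN :: "tm \<Rightarrow> bool" where
  "SN t \<longleftrightarrow> \<not> (\<exists>f. f 0 = t \<and> (\<forall>n. red (f n) (f (Suc n))))"

fun neutral :: "tm \<Rightarrow> bool" where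
  "neutral (Pair u v) = False"
| "neutral (Lam a v) = False"
| "neutral (TLam u) = False"
| "neutral _ = True"

fun star_repl :: "nat \<Rightarrow> tm \<Rightarrow> tm" where
  "star_repl z Star = FVar z Top"
| "star_repl z (FVar x a) = FVar x a"
| "star_repl z (BVar i) = BVar i"
| "star_repl z (Lam a t) = Lam a (star_repl z t)"
| "star_repl z (App t s) = App (star_repl z t) (star_repl z s)"
| "star_repl z (Pair t s) = Pair (star_repl z t) (star_repl z s)"
| "star_repl z (Proj1 t) = Proj1 (star_repl z t)"
| "star_repl z (Proj2 t) = Proj2 (star_repl z t)"
| "star_repl z (TLam t) = TLam (star_repl z t)"
| "star_repl z (TApp t a) = TApp (star_repl z t) a"

definition variant_closed :: "tm set \<Rightarrow> bool" where
  "variant_closed A \<longleftrightarrow> (\<forall>t\<in>A. \<forall>z. (z, Top) \<notin> fvars t \<longrightarrow> star_repl z t \<in> A)"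

definition RC :: "ty \<Rightarrow> tm set \<Rightarrow> bool" where
  "RC a R \<longleftrightarrow>
     (\<forall>t\<in>R. has_ty t a) \<and>
     (iso a \<longrightarrow> star_of a \<in> R) \<and> variant_closed R \<and>
     (\<forall>t\<in>R. SN t) \<and>
     (\<forall>t\<in>R. \<forall>t'. red t t' \<longrightarrow> t' \<in> R) \<and>
     (\<forall>t. has_ty t a \<longrightarrow> neutral t \<longrightarrow> (\<forall>t'. red t t' \<longrightarrow> t' \<in> R) \<longrightarrow> t \<in> R)"

definition fresh_tv :: "nat list \<Rightarrow> ty list \<Rightarrow> ty \<Rightarrow> nat" where
  "fresh_tv Xs ps b = Suc (Max (insert 0 (set Xs \<union> \<Union> (ftv ` set ps) \<union> ftv b)))"

lemma size_topen_TFree[simp]: "size (topen_at k (TFree Y) a) = size a"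
  by (induction a arbitrary: k) auto

function RED :: "ty \<Rightarrow> nat list \<Rightarrow> ty list \<Rightarrow> tm set list \<Rightarrow> tm set" where
  "RED Top Xs ps Rs = {t. has_ty t Top \<and> SN t}"
| "RED (TFree X) Xs ps Rs = (case map_of (zip Xs Rs) X of Some R \<Rightarrow> R | None \<Rightarrow> {})"
| "RED (TBound i) Xs ps Rs = {}"
| "RED (Prod a b) Xs ps Rs =
     {t. has_ty t (simsubst Xs ps (Prod a b)) \<and>
         Proj1 t \<in> RED a Xs ps Rs \<and> Proj2 t \<in> RED b Xs ps Rs}"
| "RED (Arr a b) Xs ps Rs =
     {t. has_ty t (simsubst Xs ps (Arr a b)) \<and>
         (\<forall>u\<in>RED a Xs ps Rs. App t u \<in> RED b Xs ps Rs)}"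
| "RED (All b) Xs ps Rs =
     {t. has_ty t (simsubst Xs ps (All b)) \<and>
         (\<forall>p S. is_type p \<longrightarrow> RC p S \<longrightarrow>
            TApp t p \<in> RED (topen_at 0 (TFree (fresh_tv Xs ps b)) b)
                           (Xs @ [fresh_tv Xs ps b]) (ps @ [p]) (Rs @ [S]))}"
  by pat_completeness auto
termination
  by (relation "measure (\<lambda>(a, _, _, _). size a)") auto

end

theory Submission
  imports Defs "HOL-Combinatorics.Transposition"
begin

text \<open>Girard's method: \<open>RED\<^sub>\<phi>\<close> is built from the interpretations of the components of \<open>\<phi>\<close> by
  the product, the function space, and, for a universal type, the intersection over all RCs, so by
  induction on \<open>\<phi>\<close> it suffices that each of these operations maps RCs to RCs. (CR1)--(CR3) go through
  as for System F, using subject reduction. The new clauses come from the types isomorphic to \<open>\<top>\<close>: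
  \<open>*\<^sup>\<tau>\<close> is reducible by (CR3), since it is normal and every other term of type \<open>\<tau>\<close> reduces to it by
  \<open>gentop\<close>; and variant closure holds because replacing \<open>*\<^sup>\<top>\<close> by a fresh \<open>z\<^sup>\<top>\<close> is undone by
  \<open>gentop\<close>-steps \<open>z\<^sup>\<top> \<rightarrow> *\<^sup>\<top>\<close>, along which strong normalisation and membership transfer.\<close>

section \<open>Locally nameless infrastructure\<close>

lemma obtain_fresh:
  assumes "finite (S :: nat set)" obtains x where "x \<notin> S"
  using ex_new_if_finite[OF infinite_UNIV_nat assms] by blast

lemma finite_ftv [simp]: "finite (ftv a)" by (induction a) auto
lemma finite_fvars [simp]: "finite (fvars t)" by (induction t) auto
lemma finite_ftv_tm [simp]: "finite (ftv_tm t)" by (induction t) auto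

lemma size_opn_FVar [simp]: "size (opn k (FVar x a) t) = size t"
  by (induction t arbitrary: k) auto
lemma size_topn_TFree [simp]: "size (topn k (TFree X) t) = size t"
  by (induction t arbitrary: k) auto

lemma lc_ty_at_mono: "lc_ty_at k a \<Longrightarrow> k \<le> j \<Longrightarrow> lc_ty_at j a"
  by (induction a arbitrary: k j) auto
lemma topen_at_lc: "lc_ty_at k a \<Longrightarrow> k \<le> j \<Longrightarrow> topen_at j U a = a"
  by (induction a arbitrary: k j) auto
lemma topen_at_type [simp]: "is_type a \<Longrightarrow> topen_at j U a = a"
  using topen_at_lc by blast
lemma opn_bvc: "bvc_at k t \<Longrightarrow> k \<le> j \<Longrightarrow> opn j u t = t"
  by (induction t arbitrary: k j) auto
lemma opn_bvc0 [simp]: "bvc_at 0 t \<Longrightarrow> opn j u t = t"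
  using opn_bvc by blast
lemma topn_tyc: "tyc_at k t \<Longrightarrow> k \<le> j \<Longrightarrow> topn j U t = t"
  by (induction t arbitrary: k j) (auto simp: topen_at_lc)
lemma topn_tyc0 [simp]: "tyc_at 0 t \<Longrightarrow> topn j U t = t"
  using topn_tyc by blast

lemma bvc_at_opnD: "bvc_at k (opn k u t) \<Longrightarrow> bvc_at (Suc k) t"
  by (induction t arbitrary: k) (auto split: if_splits)
lemma lc_ty_at_topenD: "lc_ty_at k (topen_at k U a) \<Longrightarrow> lc_ty_at (Suc k) a"
  by (induction a arbitrary: k) (auto split: if_splits)
lemma lc_ty_at_topen: "lc_ty_at (Suc k) a \<Longrightarrow> is_type U \<Longrightarrow> lc_ty_at k (topen_at k U a)"
  by (induction a arbitrary: k) (auto intro: lc_ty_at_mono)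
lemma tyc_at_topnD: "tyc_at k (topn k U t) \<Longrightarrow> tyc_at (Suc k) t"
  by (induction t arbitrary: k) (auto intro: lc_ty_at_topenD)
lemma tyc_at_opnD: "tyc_at k (opn j u t) \<Longrightarrow> tyc_at k t"
  by (induction t arbitrary: k j) auto
lemma bvc_at_topn [simp]: "bvc_at k (topn j U t) = bvc_at k t"
  by (induction t arbitrary: k j) auto

lemma ftv_topen_at_supset: "ftv a \<subseteq> ftv (topen_at k U a)"
  by (induction a arbitrary: k) auto
lemma ftv_topen_at_subset: "ftv (topen_at k U a) \<subseteq> ftv U \<union> ftv a"
  by (induction a arbitrary: k) auto
lemma ftv_tm_topn_subset: "ftv_tm (topn k U t) \<subseteq> ftv U \<union> ftv_tm t"
  using ftv_topen_at_subset by (induction t arbitrary: k) fastforce+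
lemma ftv_tm_opn_subset: "ftv_tm (opn k u t) \<subseteq> ftv_tm u \<union> ftv_tm t"
  by (induction t arbitrary: k) auto

lemma opn_star_of [simp]: "opn k u (star_of \<tau>) = star_of \<tau>"
  by (induction \<tau> arbitrary: k) auto
lemma topn_star_of: "iso \<tau> \<Longrightarrow> topn k U (star_of \<tau>) = star_of (topen_at k U \<tau>)"
  by (induction \<tau> arbitrary: k rule: iso.induct) auto
lemma iso_topen_at: "iso a \<Longrightarrow> iso (topen_at k U a)"
  by (induction a arbitrary: k rule: iso.induct) auto

lemma star_of_neq [simp]:
  "star_of \<tau> \<noteq> App t u" "star_of \<tau> \<noteq> Proj1 t" "star_of \<tau> \<noteq> Proj2 t"
  "star_of \<tau> \<noteq> TApp t U" "star_of \<tau> \<noteq> FVar x a" "star_of \<tau> \<noteq> BVar i"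
  "App t u \<noteq> star_of \<tau>" "Proj1 t \<noteq> star_of \<tau>" "Proj2 t \<noteq> star_of \<tau>"
  "TApp t U \<noteq> star_of \<tau>" "FVar x a \<noteq> star_of \<tau>" "BVar i \<noteq> star_of \<tau>"
  by (cases \<tau>; simp)+

lemma opn_FVar_inj:
  "x \<notin> fst ` fvars t \<Longrightarrow> x \<notin> fst ` fvars t' \<Longrightarrow>
   opn k (FVar x a) t = opn k (FVar x a) t' \<Longrightarrow> t = t'"
  by (induction t arbitrary: t' k) (case_tac t'; auto split: if_splits simp: image_Un)+

lemma topen_at_TFree_inj:
  "X \<notin> ftv a \<Longrightarrow> X \<notin> ftv b \<Longrightarrow> topen_at k (TFree X) a = topen_at k (TFree X) b \<Longrightarrow> a = b"
  by (induction a arbitrary: b k) (case_tac b; auto split: if_splits)+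

lemma topn_TFree_inj:
  "X \<notin> ftv_tm t \<Longrightarrow> X \<notin> ftv_tm t' \<Longrightarrow> topn k (TFree X) t = topn k (TFree X) t' \<Longrightarrow> t = t'"
  by (induction t arbitrary: t' k) (case_tac t'; auto dest: topen_at_TFree_inj)+

section \<open>Typing\<close>

lemma has_ty_lc: "has_ty t A \<Longrightarrow> is_type A \<and> bvc_at 0 t \<and> tyc_at 0 t"
proof (induction rule: has_ty.induct)
  case (ty_Lam a t b)
  obtain x where "x \<notin> fst ` fvars t" using obtain_fresh[of "fst ` fvars t"] by auto
  with ty_Lam show ?case using bvc_at_opnD[of 0 "FVar x a" t] tyc_at_opnD[of 0 0 "FVar x a" t] by auto
next
  case (ty_TLam t b)
  obtain X where "X \<notin> ftv_tm t \<union> ftv b" using obtain_fresh[of "ftv_tm t \<union> ftv b"] by auto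
  with ty_TLam show ?case using tyc_at_topnD[of 0 "TFree X" t] lc_ty_at_topenD[of 0 "TFree X" b] by auto
qed (auto intro: lc_ty_at_topen lc_ty_at_mono)

lemma has_ty_type: "has_ty t A \<Longrightarrow> is_type A"
  and has_ty_bvc: "has_ty t A \<Longrightarrow> bvc_at 0 t"
  and has_ty_tyc: "has_ty t A \<Longrightarrow> tyc_at 0 t"
  using has_ty_lc by blast+

lemma has_ty_ftv: "has_ty t A \<Longrightarrow> ftv A \<subseteq> ftv_tm t"
proof (induction rule: has_ty.induct)
  case (ty_Lam a t b)
  obtain x where "x \<notin> fst ` fvars t" using obtain_fresh[of "fst ` fvars t"] by auto
  with ty_Lam show ?case using ftv_tm_opn_subset[of 0 "FVar x a" t] by fastforce
next
  case (ty_TLam t b)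
  obtain X where "X \<notin> ftv_tm t \<union> ftv b" using obtain_fresh[of "ftv_tm t \<union> ftv b"] by auto
  with ty_TLam show ?case
    using ftv_tm_topn_subset[of 0 "TFree X" t] ftv_topen_at_supset[of b 0 "TFree X"] by fastforce
next
  case (ty_TApp t b U)
  then show ?case using ftv_topen_at_subset[of 0 U b] by auto
qed auto

inductive_cases has_ty_StarE: "has_ty Star A"
inductive_cases has_ty_FVarE: "has_ty (FVar x a) A"
inductive_cases has_ty_LamE: "has_ty (Lam a t) A"
inductive_cases has_ty_AppE: "has_ty (App t u) A"
inductive_cases has_ty_PairE: "has_ty (Pair t u) A"
inductive_cases has_ty_Proj1E: "has_ty (Proj1 t) A"
inductive_cases has_ty_Proj2E: "has_ty (Proj2 t) A"
inductive_cases has_ty_TLamE: "has_ty (TLam t) A"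
inductive_cases has_ty_TAppE: "has_ty (TApp t U) A"

lemma has_ty_unique: "has_ty t A \<Longrightarrow> has_ty t B \<Longrightarrow> A = B"
proof (induction arbitrary: B rule: has_ty.induct)
  case (ty_Lam a t b)
  from ty_Lam.prems obtain b' where "B = Arr a b'"
    and "\<And>x. x \<notin> fst ` fvars t \<Longrightarrow> has_ty (opn 0 (FVar x a) t) b'"
    by (auto elim: has_ty_LamE)
  moreover obtain x where "x \<notin> fst ` fvars t" using obtain_fresh[of "fst ` fvars t"] by auto
  ultimately show ?case using ty_Lam.IH by auto
next
  case (ty_TLam t b)
  from ty_TLam.prems obtain b' where "B = All b'"
    and "\<And>X. X \<notin> ftv_tm t \<union> ftv b' \<Longrightarrow> has_ty (topn 0 (TFree X) t) (topen_at 0 (TFree X) b')"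
    by (auto elim: has_ty_TLamE)
  moreover obtain X where "X \<notin> ftv_tm t \<union> ftv b \<union> ftv b'" using obtain_fresh[of "ftv_tm t \<union> ftv b \<union> ftv b'"] by auto
  ultimately show ?case using ty_TLam.IH topen_at_TFree_inj by fastforce
next
  case (ty_App t a b u) from ty_App.prems show ?case by (elim has_ty_AppE) (use ty_App.IH in force)
next
  case (ty_Proj1 t a b) from ty_Proj1.prems show ?case by (elim has_ty_Proj1E) (use ty_Proj1.IH in force)
next
  case (ty_Proj2 t a b) from ty_Proj2.prems show ?case by (elim has_ty_Proj2E) (use ty_Proj2.IH in force)
next
  case (ty_TApp t b U) from ty_TApp.prems show ?case by (elim has_ty_TAppE) (use ty_TApp.IH in force)
next
  case (ty_Pair t a u b) from ty_Pair.prems show ?case by (elim has_ty_PairE) (use ty_Pair.IH in simp)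
qed (auto elim: has_ty_StarE has_ty_FVarE)

lemma has_ty_star_of: "iso \<tau> \<Longrightarrow> is_type \<tau> \<Longrightarrow> has_ty (star_of \<tau>) \<tau>"
proof (induction "size \<tau>" arbitrary: \<tau> rule: less_induct)
  case less
  show ?case
  proof (cases \<tau>)
    case (All b)
    have "has_ty (topn 0 (TFree X) (star_of b)) (topen_at 0 (TFree X) b)" for X
      using less All by (auto simp: topn_star_of intro!: less.hyps iso_topen_at lc_ty_at_topen)
    then show ?thesis using All by (auto intro: has_ty.ty_TLam)
  qed (use less in \<open>auto intro: has_ty.intros\<close>)
qed

section \<open>Renaming free variables\<close>

fun swap_tm :: "nat \<Rightarrow> nat \<Rightarrow> tm \<Rightarrow> tm" where
  "swap_tm x y Star = Star"
| "swap_tm x y (FVar n a) = FVar (transpose x y n) a"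
| "swap_tm x y (BVar i) = BVar i"
| "swap_tm x y (Lam a t) = Lam a (swap_tm x y t)"
| "swap_tm x y (App t s) = App (swap_tm x y t) (swap_tm x y s)"
| "swap_tm x y (Pair t s) = Pair (swap_tm x y t) (swap_tm x y s)"
| "swap_tm x y (Proj1 t) = Proj1 (swap_tm x y t)"
| "swap_tm x y (Proj2 t) = Proj2 (swap_tm x y t)"
| "swap_tm x y (TLam t) = TLam (swap_tm x y t)"
| "swap_tm x y (TApp t a) = TApp (swap_tm x y t) a"

lemma swap_tm_opn: "swap_tm x y (opn k u t) = opn k (swap_tm x y u) (swap_tm x y t)"
  by (induction t arbitrary: k) auto
lemma swap_tm_topn: "swap_tm x y (topn k U t) = topn k U (swap_tm x y t)"
  by (induction t arbitrary: k) auto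
lemma names_swap_tm: "fst ` fvars (swap_tm x y t) = transpose x y ` fst ` fvars t"
  by (induction t) (auto simp: image_Un)
lemma ftv_tm_swap_tm [simp]: "ftv_tm (swap_tm x y t) = ftv_tm t"
  by (induction t) auto
lemma bvc_at_swap_tm [simp]: "bvc_at k (swap_tm x y t) = bvc_at k t"
  by (induction t arbitrary: k) auto
lemma tyc_at_swap_tm [simp]: "tyc_at k (swap_tm x y t) = tyc_at k t"
  by (induction t arbitrary: k) auto
lemma swap_tm_fresh: "x \<notin> fst ` fvars t \<Longrightarrow> y \<notin> fst ` fvars t \<Longrightarrow> swap_tm x y t = t"
  by (induction t) (auto simp: image_Un)
lemma swap_tm_star_of [simp]: "swap_tm x y (star_of \<tau>) = star_of \<tau>"
  by (induction \<tau>) auto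
lemma swap_tm_involutory [simp]: "swap_tm x y (swap_tm x y t) = t"
  by (induction t) auto
lemma swap_tm_eq_star_of [simp]: "swap_tm x y u = star_of \<tau> \<longleftrightarrow> u = star_of \<tau>"
  by (metis swap_tm_star_of swap_tm_involutory)
lemma has_ty_swap_tm: "has_ty t A \<Longrightarrow> has_ty (swap_tm x y t) A"
proof (induction rule: has_ty.induct)
  case (ty_Lam a t b)
  have "has_ty (opn 0 (FVar z a) (swap_tm x y t)) b" if "z \<notin> fst ` fvars (swap_tm x y t)" for z
    using ty_Lam.IH[of "transpose x y z"] that
    by (simp add: names_swap_tm swap_tm_opn in_transpose_image_iff)
  with ty_Lam.hyps show ?case by (auto intro: has_ty.ty_Lam)
next
  case (ty_TLam t b)
  show ?case by (simp, rule has_ty.ty_TLam) (use ty_TLam.IH in \<open>auto simp: swap_tm_topn\<close>)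
qed (auto intro: has_ty.intros)

fun tswap_ty :: "nat \<Rightarrow> nat \<Rightarrow> ty \<Rightarrow> ty" where
  "tswap_ty X Y (TFree n) = TFree (transpose X Y n)"
| "tswap_ty X Y (TBound i) = TBound i"
| "tswap_ty X Y Top = Top"
| "tswap_ty X Y (Prod a b) = Prod (tswap_ty X Y a) (tswap_ty X Y b)"
| "tswap_ty X Y (Arr a b) = Arr (tswap_ty X Y a) (tswap_ty X Y b)"
| "tswap_ty X Y (All a) = All (tswap_ty X Y a)"

fun tswap_tm :: "nat \<Rightarrow> nat \<Rightarrow> tm \<Rightarrow> tm" where
  "tswap_tm X Y Star = Star"
| "tswap_tm X Y (FVar n a) = FVar n (tswap_ty X Y a)"
| "tswap_tm X Y (BVar i) = BVar i"
| "tswap_tm X Y (Lam a t) = Lam (tswap_ty X Y a) (tswap_tm X Y t)"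
| "tswap_tm X Y (App t s) = App (tswap_tm X Y t) (tswap_tm X Y s)"
| "tswap_tm X Y (Pair t s) = Pair (tswap_tm X Y t) (tswap_tm X Y s)"
| "tswap_tm X Y (Proj1 t) = Proj1 (tswap_tm X Y t)"
| "tswap_tm X Y (Proj2 t) = Proj2 (tswap_tm X Y t)"
| "tswap_tm X Y (TLam t) = TLam (tswap_tm X Y t)"
| "tswap_tm X Y (TApp t a) = TApp (tswap_tm X Y t) (tswap_ty X Y a)"

lemma tswap_ty_topen_at: "tswap_ty X Y (topen_at k U a) = topen_at k (tswap_ty X Y U) (tswap_ty X Y a)"
  by (induction a arbitrary: k) auto
lemma ftv_tswap_ty: "ftv (tswap_ty X Y a) = transpose X Y ` ftv a"
  by (induction a) auto
lemma lc_ty_at_tswap_ty [simp]: "lc_ty_at k (tswap_ty X Y a) = lc_ty_at k a"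
  by (induction a arbitrary: k) auto
lemma tswap_ty_fresh: "X \<notin> ftv a \<Longrightarrow> Y \<notin> ftv a \<Longrightarrow> tswap_ty X Y a = a"
  by (induction a) auto
lemma iso_tswap_ty [simp]: "iso (tswap_ty X Y a) = iso a"
  by (induction a) auto

lemma tswap_tm_opn: "tswap_tm X Y (opn k u t) = opn k (tswap_tm X Y u) (tswap_tm X Y t)"
  by (induction t arbitrary: k) auto
lemma tswap_tm_topn: "tswap_tm X Y (topn k U t) = topn k (tswap_ty X Y U) (tswap_tm X Y t)"
  by (induction t arbitrary: k) (auto simp: tswap_ty_topen_at)
lemma names_tswap_tm [simp]: "fst ` fvars (tswap_tm X Y t) = fst ` fvars t"
  by (induction t) (auto simp: image_Un)
lemma ftv_tm_tswap_tm: "ftv_tm (tswap_tm X Y t) = transpose X Y ` ftv_tm t"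
  by (induction t) (auto simp: ftv_tswap_ty image_Un)
lemma bvc_at_tswap_tm [simp]: "bvc_at k (tswap_tm X Y t) = bvc_at k t"
  by (induction t arbitrary: k) auto
lemma tyc_at_tswap_tm [simp]: "tyc_at k (tswap_tm X Y t) = tyc_at k t"
  by (induction t arbitrary: k) auto
lemma tswap_tm_fresh: "X \<notin> ftv_tm t \<Longrightarrow> Y \<notin> ftv_tm t \<Longrightarrow> tswap_tm X Y t = t"
  by (induction t) (auto simp: tswap_ty_fresh)
lemma tswap_tm_star_of: "tswap_tm X Y (star_of \<tau>) = star_of (tswap_ty X Y \<tau>)"
  by (induction \<tau>) auto
lemma tswap_ty_involutory [simp]: "tswap_ty X Y (tswap_ty X Y a) = a"
  by (induction a) auto
lemma tswap_tm_involutory [simp]: "tswap_tm X Y (tswap_tm X Y t) = t"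
  by (induction t) auto
lemma tswap_tm_eq_star_of: "tswap_tm X Y u = star_of (tswap_ty X Y \<tau>) \<longleftrightarrow> u = star_of \<tau>"
  by (metis tswap_tm_star_of tswap_tm_involutory)

lemma has_ty_tswap_tm: "has_ty t A \<Longrightarrow> has_ty (tswap_tm X Y t) (tswap_ty X Y A)"
proof (induction rule: has_ty.induct)
  case (ty_Lam a t b)
  then show ?case by (auto intro!: has_ty.ty_Lam simp: tswap_tm_opn)
next
  case (ty_TLam t b)
  have "has_ty (topn 0 (TFree Z) (tswap_tm X Y t)) (topen_at 0 (TFree Z) (tswap_ty X Y b))"
    if "Z \<notin> ftv_tm (tswap_tm X Y t) \<union> ftv (tswap_ty X Y b)" for Z
    using ty_TLam.IH[of "transpose X Y Z"] that
    by (simp add: ftv_tm_tswap_tm ftv_tswap_ty in_transpose_image_iff tswap_tm_topn tswap_ty_topen_at)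
  then show ?case by (auto intro: has_ty.ty_TLam)
next
  case (ty_TApp t b U)
  then show ?case using has_ty.ty_TApp[of "tswap_tm X Y t" "tswap_ty X Y b" "tswap_ty X Y U"]
    by (simp add: tswap_ty_topen_at)
qed (auto intro: has_ty.intros)

text \<open>By equivariance, one fresh name suffices to introduce a binder.\<close>

lemma has_ty_LamI:
  assumes "is_type a" "x \<notin> fst ` fvars t" "has_ty (opn 0 (FVar x a) t) b"
  shows "has_ty (Lam a t) (Arr a b)"
proof (rule has_ty.ty_Lam[OF assms(1)])
  fix y assume "y \<notin> fst ` fvars t"
  with assms(2) show "has_ty (opn 0 (FVar y a) t) b"
    using has_ty_swap_tm[OF assms(3), of x y] by (simp add: swap_tm_opn swap_tm_fresh)
qed

lemma has_ty_TLamI: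
  assumes "X \<notin> ftv_tm t \<union> ftv b" "has_ty (topn 0 (TFree X) t) (topen_at 0 (TFree X) b)"
  shows "has_ty (TLam t) (All b)"
proof (rule has_ty.ty_TLam)
  fix Y assume "Y \<notin> ftv_tm t \<union> ftv b"
  with assms(1) show "has_ty (topn 0 (TFree Y) t) (topen_at 0 (TFree Y) b)"
    using has_ty_tswap_tm[OF assms(2), of X Y]
    by (simp add: tswap_tm_topn tswap_ty_topen_at tswap_tm_fresh tswap_ty_fresh)
qed

lemma has_ty_Lam_cofinite:
  assumes "is_type a" "finite F" "\<And>x. x \<notin> F \<Longrightarrow> x \<notin> fst ` fvars t \<Longrightarrow> has_ty (opn 0 (FVar x a) t) b"
  shows "has_ty (Lam a t) (Arr a b)"
proof -
  obtain x where "x \<notin> F \<union> fst ` fvars t" using obtain_fresh[of "F \<union> fst ` fvars t"] assms(2) by auto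
  then show ?thesis using has_ty_LamI assms by auto
qed

lemma has_ty_TLam_cofinite:
  assumes "finite F"
    "\<And>X. X \<notin> F \<Longrightarrow> X \<notin> ftv_tm t \<union> ftv b \<Longrightarrow> has_ty (topn 0 (TFree X) t) (topen_at 0 (TFree X) b)"
  shows "has_ty (TLam t) (All b)"
proof -
  obtain X where "X \<notin> F \<union> ftv_tm t \<union> ftv b" using obtain_fresh[of "F \<union> ftv_tm t \<union> ftv b"] assms(1) by auto
  then show ?thesis using has_ty_TLamI assms by auto
qed

section \<open>Substitution and subject reduction\<close>

fun subst :: "nat \<Rightarrow> ty \<Rightarrow> tm \<Rightarrow> tm \<Rightarrow> tm" where
  "subst x a v Star = Star"
| "subst x a v (FVar y b) = (if y = x \<and> b = a then v else FVar y b)"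
| "subst x a v (BVar i) = BVar i"
| "subst x a v (Lam b t) = Lam b (subst x a v t)"
| "subst x a v (App t s) = App (subst x a v t) (subst x a v s)"
| "subst x a v (Pair t s) = Pair (subst x a v t) (subst x a v s)"
| "subst x a v (Proj1 t) = Proj1 (subst x a v t)"
| "subst x a v (Proj2 t) = Proj2 (subst x a v t)"
| "subst x a v (TLam t) = TLam (subst x a v t)"
| "subst x a v (TApp t b) = TApp (subst x a v t) b"

lemma subst_opn: "bvc_at 0 v \<Longrightarrow> subst x a v (opn k u t) = opn k (subst x a v u) (subst x a v t)"
  by (induction t arbitrary: k) auto
lemma subst_fresh: "(x, a) \<notin> fvars t \<Longrightarrow> subst x a v t = t"
  by (induction t) auto
lemma subst_topn: "tyc_at 0 v \<Longrightarrow> topn k U (subst x a v t) = subst x a v (topn k U t)"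
  by (induction t arbitrary: k) auto
lemma fvars_subst: "fvars t - {(x, a)} \<subseteq> fvars (subst x a v t)"
  by (induction t) auto
lemma ftv_tm_subst: "ftv_tm t \<subseteq> ftv_tm (subst x a v t) \<union> ftv a"
  by (induction t) auto

lemma has_ty_subst: "has_ty s B \<Longrightarrow> has_ty v a \<Longrightarrow> has_ty (subst x a v s) B"
proof (induction arbitrary: v rule: has_ty.induct)
  case (ty_Lam c t b)
  have "has_ty (opn 0 (FVar z c) (subst x a v t)) b"
    if "z \<noteq> x" "z \<notin> fst ` fvars (subst x a v t)" for z
  proof -
    have "z \<notin> fst ` fvars t" using that fvars_subst[of t x a v] by force
    then have "has_ty (subst x a v (opn 0 (FVar z c) t)) b" using ty_Lam.IH ty_Lam.prems by blast
    then show ?thesis using that has_ty_bvc[OF ty_Lam.prems] by (simp add: subst_opn)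
  qed
  then show ?case using has_ty_Lam_cofinite[OF ty_Lam.hyps(1), of "{x}"] by simp
next
  case (ty_TLam t b)
  have "has_ty (topn 0 (TFree X) (subst x a v t)) (topen_at 0 (TFree X) b)"
    if "X \<notin> ftv a" "X \<notin> ftv_tm (subst x a v t) \<union> ftv b" for X
  proof -
    have "X \<notin> ftv_tm t \<union> ftv b" using that ftv_tm_subst[of t x a v] by auto
    then show ?thesis using ty_TLam has_ty_tyc[OF ty_TLam.prems] by (simp add: subst_topn)
  qed
  then show ?case using has_ty_TLam_cofinite[of "ftv a"] by simp
qed (auto intro: has_ty.intros)

lemma has_ty_opn:
  assumes "\<And>x. x \<notin> fst ` fvars t \<Longrightarrow> has_ty (opn 0 (FVar x a) t) b" "has_ty v a"
  shows "has_ty (opn 0 v t) b"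
proof -
  obtain x where x: "x \<notin> fst ` fvars t" using obtain_fresh[of "fst ` fvars t"] by auto
  then have "(x, a) \<notin> fvars t" by force
  moreover have "has_ty (subst x a v (opn 0 (FVar x a) t)) b" using has_ty_subst assms x by blast
  ultimately show ?thesis using has_ty_bvc[OF assms(2)] by (simp add: subst_opn subst_fresh)
qed

definition type_valued :: "(nat \<Rightarrow> ty option) \<Rightarrow> bool" where
  "type_valued s \<longleftrightarrow> (\<forall>Y U. s Y = Some U \<longrightarrow> is_type U)"

fun tsubst_tm :: "(nat \<Rightarrow> ty option) \<Rightarrow> tm \<Rightarrow> tm" where
  "tsubst_tm s Star = Star"
| "tsubst_tm s (FVar y b) = FVar y (tsubst s b)"
| "tsubst_tm s (BVar i) = BVar i"
| "tsubst_tm s (Lam b t) = Lam (tsubst s b) (tsubst_tm s t)"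
| "tsubst_tm s (App t u) = App (tsubst_tm s t) (tsubst_tm s u)"
| "tsubst_tm s (Pair t u) = Pair (tsubst_tm s t) (tsubst_tm s u)"
| "tsubst_tm s (Proj1 t) = Proj1 (tsubst_tm s t)"
| "tsubst_tm s (Proj2 t) = Proj2 (tsubst_tm s t)"
| "tsubst_tm s (TLam t) = TLam (tsubst_tm s t)"
| "tsubst_tm s (TApp t b) = TApp (tsubst_tm s t) (tsubst s b)"

lemma tsubst_topen_at:
  "type_valued s \<Longrightarrow> tsubst s (topen_at k U a) = topen_at k (tsubst s U) (tsubst s a)"
  by (induction a arbitrary: k) (auto simp: type_valued_def split: option.splits)
lemma lc_ty_at_tsubst: "lc_ty_at k a \<Longrightarrow> type_valued s \<Longrightarrow> lc_ty_at k (tsubst s a)"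
  by (induction a arbitrary: k) (auto simp: type_valued_def split: option.splits intro: lc_ty_at_mono)
lemma ftv_tsubst: "ftv a \<subseteq> ftv (tsubst s a) \<union> dom s"
  by (induction a) (auto split: option.splits)
lemma tsubst_fresh: "\<forall>Y\<in>ftv a. s Y = None \<Longrightarrow> tsubst s a = a"
  by (induction a) auto
lemma tsubst_tm_opn: "tsubst_tm s (opn k u t) = opn k (tsubst_tm s u) (tsubst_tm s t)"
  by (induction t arbitrary: k) auto
lemma tsubst_tm_topn:
  "type_valued s \<Longrightarrow> tsubst_tm s (topn k U t) = topn k (tsubst s U) (tsubst_tm s t)"
  by (induction t arbitrary: k) (auto simp: tsubst_topen_at)
lemma names_tsubst_tm [simp]: "fst ` fvars (tsubst_tm s t) = fst ` fvars t"
  by (induction t) (auto simp: image_Un)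
lemma ftv_tm_tsubst_tm: "ftv_tm t \<subseteq> ftv_tm (tsubst_tm s t) \<union> dom s"
  using ftv_tsubst by (induction t) fastforce+
lemma tsubst_tm_fresh: "\<forall>Y\<in>ftv_tm t. s Y = None \<Longrightarrow> tsubst_tm s t = t"
  by (induction t) (auto simp: tsubst_fresh)

lemma has_ty_tsubst_tm:
  "has_ty t A \<Longrightarrow> type_valued s \<Longrightarrow> finite (dom s) \<Longrightarrow> has_ty (tsubst_tm s t) (tsubst s A)"
proof (induction rule: has_ty.induct)
  case (ty_Lam a t b)
  then show ?case by (auto intro!: has_ty.ty_Lam lc_ty_at_tsubst simp: tsubst_tm_opn)
next
  case (ty_TLam t b)
  have "has_ty (topn 0 (TFree X) (tsubst_tm s t)) (topen_at 0 (TFree X) (tsubst s b))"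
    if "X \<notin> dom s" "X \<notin> ftv_tm (tsubst_tm s t) \<union> ftv (tsubst s b)" for X
  proof -
    have "X \<notin> ftv_tm t \<union> ftv b" using that ftv_tm_tsubst_tm[of t s] ftv_tsubst[of b s] by auto
    then have "has_ty (tsubst_tm s (topn 0 (TFree X) t)) (tsubst s (topen_at 0 (TFree X) b))"
      using ty_TLam.IH ty_TLam.prems by blast
    then show ?thesis using ty_TLam.prems that by (simp add: tsubst_tm_topn tsubst_topen_at domIff)
  qed
  then show ?case using ty_TLam.prems by (auto intro: has_ty_TLam_cofinite)
next
  case (ty_TApp t b U)
  then have "has_ty (TApp (tsubst_tm s t) (tsubst s U)) (topen_at 0 (tsubst s U) (tsubst s b))"
    by (auto intro!: has_ty.ty_TApp lc_ty_at_tsubst)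
  then show ?case using ty_TApp.prems by (simp add: tsubst_topen_at)
qed (auto intro: has_ty.intros lc_ty_at_tsubst)

lemma has_ty_topn:
  assumes "\<And>X. X \<notin> ftv_tm t \<union> ftv b \<Longrightarrow> has_ty (topn 0 (TFree X) t) (topen_at 0 (TFree X) b)"
    "is_type U"
  shows "has_ty (topn 0 U t) (topen_at 0 U b)"
proof -
  obtain X where X: "X \<notin> ftv_tm t \<union> ftv b" using obtain_fresh[of "ftv_tm t \<union> ftv b"] by auto
  let ?s = "[X \<mapsto> U]"
  have s: "type_valued ?s" using assms(2) by (auto simp: type_valued_def)
  have "has_ty (tsubst_tm ?s (topn 0 (TFree X) t)) (tsubst ?s (topen_at 0 (TFree X) b))"
    using has_ty_tsubst_tm assms X s by auto
  moreover have "tsubst_tm ?s t = t" "tsubst ?s b = b"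
    using X by (auto intro: tsubst_tm_fresh tsubst_fresh)
  ultimately show ?thesis using s by (simp add: tsubst_tm_topn tsubst_topen_at)
qed

text \<open>Covers both \<open>\<eta>\<close> (with \<open>s = BVar 0\<close>) and \<open>\<eta>\<^sub>t\<^sub>o\<^sub>p\<close> (with \<open>s = *\<^sup>\<tau>\<close>).\<close>

lemma has_ty_eta_contractum:
  assumes "has_ty (Lam a (App t s)) A" "bvc_at 0 t"
    and "\<And>x. is_type a \<Longrightarrow> has_ty (opn 0 (FVar x a) s) a"
  shows "has_ty t A"
proof -
  from assms(1) obtain b where A: "A = Arr a b" and a: "is_type a"
    and body: "\<And>x. x \<notin> fst ` fvars t \<union> fst ` fvars s \<Longrightarrow> has_ty (App t (opn 0 (FVar x a) s)) b"
    by (auto elim: has_ty_LamE simp: image_Un assms(2))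
  obtain x where "x \<notin> fst ` fvars t \<union> fst ` fvars s"
    using obtain_fresh[of "fst ` fvars t \<union> fst ` fvars s"] by auto
  with body obtain c where "has_ty t (Arr c b)" "has_ty (opn 0 (FVar x a) s) c"
    by (blast elim: has_ty_AppE)
  with assms(3)[OF a] show ?thesis using A has_ty_unique by blast
qed

lemma has_ty_eta2_contractum:
  assumes "has_ty (TLam (TApp s (TBound 0))) A" "tyc_at 0 s"
  shows "has_ty s A"
proof -
  from assms(1) obtain b where A: "A = All b"
    and body: "\<And>X. X \<notin> ftv_tm s \<union> ftv b \<Longrightarrow> has_ty (TApp s (TFree X)) (topen_at 0 (TFree X) b)"
    by (auto elim: has_ty_TLamE simp: assms(2))
  obtain X where X: "X \<notin> ftv_tm s \<union> ftv b" using obtain_fresh[of "ftv_tm s \<union> ftv b"] by auto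
  with body obtain c where c: "topen_at 0 (TFree X) b = topen_at 0 (TFree X) c" "has_ty s (All c)"
    by (blast elim: has_ty_TAppE)
  have "X \<notin> ftv c" using has_ty_ftv[OF c(2)] X by auto
  with X c(1) have "b = c" using topen_at_TFree_inj by blast
  with A c(2) show ?thesis by simp
qed

lemma subject_red: "red t t' \<Longrightarrow> has_ty t A \<Longrightarrow> has_ty t' A"
proof (induction arbitrary: A rule: red.induct)
  case (beta a t v)
  then show ?case by (auto elim!: has_ty_AppE has_ty_LamE intro: has_ty_opn)
next
  case (eta t a)
  show ?case by (rule has_ty_eta_contractum[OF eta.prems eta.hyps]) (simp add: has_ty.ty_FVar)
next
  case (eta_top \<tau> t)
  show ?case
    by (rule has_ty_eta_contractum[OF eta_top.prems eta_top.hyps(2)]) (simp add: has_ty_star_of eta_top.hyps(1))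
next
  case (SP u)
  then obtain a b where "has_ty u (Prod a b)" by (blast elim: has_ty_PairE has_ty_Proj1E)
  then have "has_ty (Pair (Proj1 u) (Proj2 u)) (Prod a b)" by (auto intro: has_ty.intros)
  with SP.prems show ?case using has_ty_unique \<open>has_ty u (Prod a b)\<close> by metis
next
  case (gentop u \<tau>)
  then show ?case using has_ty_unique has_ty_star_of has_ty_type by metis
next
  case (pair_top1 u a \<tau>)
  then have "has_ty (Pair (Proj1 u) (star_of \<tau>)) (Prod a \<tau>)"
    using has_ty_type by (auto intro!: has_ty.intros has_ty_star_of)
  with pair_top1 show ?case using has_ty_unique by metis
next
  case (pair_top2 u \<tau> b)
  then have "has_ty (Pair (star_of \<tau>) (Proj2 u)) (Prod \<tau> b)"
    using has_ty_type by (auto intro!: has_ty.intros has_ty_star_of)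
  with pair_top2 show ?case using has_ty_unique by metis
next
  case (beta2 t U)
  then show ?case by (auto elim!: has_ty_TAppE has_ty_TLamE intro: has_ty_topn)
next
  case (eta2 s)
  show ?case by (rule has_ty_eta2_contractum[OF eta2.prems eta2.hyps])
next
  case (c_Lam t t' a)
  from c_Lam.prems obtain b where "A = Arr a b" "is_type a"
    "\<And>x. x \<notin> fst ` fvars t \<Longrightarrow> has_ty (opn 0 (FVar x a) t) b"
    by (auto elim: has_ty_LamE)
  with c_Lam.IH show ?case by (auto intro: has_ty_Lam_cofinite[of _ "fst ` fvars t"])
next
  case (c_TLam t t')
  from c_TLam.prems obtain b where A: "A = All b"
    and "\<And>X. X \<notin> ftv_tm t \<union> ftv b \<Longrightarrow> has_ty (topn 0 (TFree X) t) (topen_at 0 (TFree X) b)"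
    by (auto elim: has_ty_TLamE)
  with c_TLam.IH show ?case unfolding A by (intro has_ty_TLam_cofinite[of "ftv_tm t"]) auto
qed (blast elim: has_ty_AppE has_ty_PairE has_ty_Proj1E has_ty_Proj2E has_ty_TAppE
    intro: has_ty.intros)+

section \<open>Reduction under renaming; normality of stars\<close>

lemma red_swap_tm: "red t t' \<Longrightarrow> red (swap_tm x y t) (swap_tm x y t')"
proof (induction rule: red.induct)
  case (c_Lam t t' a)
  have "red (opn 0 (FVar z a) (swap_tm x y t)) (opn 0 (FVar z a) (swap_tm x y t'))"
    if "z \<notin> fst ` fvars (swap_tm x y t) \<union> fst ` fvars (swap_tm x y t')" for z
    using c_Lam.IH[of "transpose x y z"] that
    by (simp add: names_swap_tm in_transpose_image_iff swap_tm_opn)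
  then show ?case by (simp, intro red.c_Lam) auto
next
  case (c_TLam t t')
  show ?case by (simp, rule red.c_TLam) (use c_TLam.IH in \<open>auto simp: swap_tm_topn\<close>)
qed (auto intro: red.intros has_ty_swap_tm simp: swap_tm_opn swap_tm_topn)

lemma red_tswap_tm: "red t t' \<Longrightarrow> red (tswap_tm X Y t) (tswap_tm X Y t')"
proof (induction rule: red.induct)
  case (gentop u \<tau>)
  then show ?case
    using red.gentop[of "tswap_tm X Y u" "tswap_ty X Y \<tau>"] has_ty_tswap_tm tswap_tm_eq_star_of
    by (auto simp: tswap_tm_star_of)
next
  case (c_Lam t t' a)
  show ?case by (simp, rule red.c_Lam) (use c_Lam.IH in \<open>auto simp: tswap_tm_opn\<close>)
next
  case (c_TLam t t')
  have "red (topn 0 (TFree Z) (tswap_tm X Y t)) (topn 0 (TFree Z) (tswap_tm X Y t'))"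
    if "Z \<notin> ftv_tm (tswap_tm X Y t) \<union> ftv_tm (tswap_tm X Y t')" for Z
    using c_TLam.IH[of "transpose X Y Z"] that
    by (simp add: ftv_tm_tswap_tm in_transpose_image_iff tswap_tm_topn)
  then show ?case by (auto intro: red.c_TLam)
qed (auto intro: red.intros has_ty_tswap_tm[of _ "Prod _ _", simplified]
    simp: tswap_tm_opn tswap_tm_topn tswap_tm_star_of)

lemma red_LamI:
  assumes "x \<notin> fst ` fvars t \<union> fst ` fvars t'" "red (opn 0 (FVar x a) t) (opn 0 (FVar x a) t')"
  shows "red (Lam a t) (Lam a t')"
proof (rule red.c_Lam)
  fix y assume "y \<notin> fst ` fvars t \<union> fst ` fvars t'"
  with assms(1) show "red (opn 0 (FVar y a) t) (opn 0 (FVar y a) t')"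
    using red_swap_tm[OF assms(2), of x y] by (simp add: swap_tm_opn swap_tm_fresh)
qed

lemma red_TLamI:
  assumes "X \<notin> ftv_tm t \<union> ftv_tm t'" "red (topn 0 (TFree X) t) (topn 0 (TFree X) t')"
  shows "red (TLam t) (TLam t')"
proof (rule red.c_TLam)
  fix Y assume "Y \<notin> ftv_tm t \<union> ftv_tm t'"
  with assms(1) show "red (topn 0 (TFree Y) t) (topn 0 (TFree Y) t')"
    using red_tswap_tm[OF assms(2), of X Y] by (simp add: tswap_tm_topn tswap_tm_fresh)
qed

lemma star_of_normal:
  assumes "iso \<tau>" "is_type \<tau>" shows "\<not> red (star_of \<tau>) r"
proof
  have "red s r \<Longrightarrow> s = star_of \<sigma> \<Longrightarrow> iso \<sigma> \<Longrightarrow> is_type \<sigma> \<Longrightarrow> False" for s r \<sigma>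
  proof (induction arbitrary: \<sigma> rule: red.induct)
    case (gentop u \<tau>')
    then show ?case using has_ty_star_of has_ty_unique has_ty_type by metis
  next
    case (c_Lam t t' a)
    then obtain B where "\<sigma> = Arr a B" "t = star_of B" by (cases \<sigma>) auto
    moreover obtain x where "x \<notin> fst ` fvars t \<union> fst ` fvars t'"
      using obtain_fresh[of "fst ` fvars t \<union> fst ` fvars t'"] by auto
    ultimately show ?case using c_Lam by auto
  next
    case (c_TLam t t')
    then obtain B where B: "\<sigma> = All B" "t = star_of B" by (cases \<sigma>) auto
    obtain X where "X \<notin> ftv_tm t \<union> ftv_tm t'" using obtain_fresh[of "ftv_tm t \<union> ftv_tm t'"] by auto
    moreover have "topn 0 (TFree X) t = star_of (topen_at 0 (TFree X) B)"
      "iso (topen_at 0 (TFree X) B)" "is_type (topen_at 0 (TFree X) B)"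
      using B c_TLam.prems by (auto simp: topn_star_of iso_topen_at intro: lc_ty_at_topen)
    ultimately show ?case using c_TLam.IH by blast
  qed (case_tac \<sigma>; auto)+
  then show "red (star_of \<tau>) r \<Longrightarrow> False" using assms by blast
qed

section \<open>Strong normalisation\<close>

lemma SN_imp_termip:
  assumes "SN t" shows "termip red t"
proof (rule ccontr)
  assume t: "\<not> termip red t"
  define next_bad where "next_bad s = (SOME s'. red s s' \<and> \<not> termip red s')" for s
  have next_bad: "red s (next_bad s) \<and> \<not> termip red (next_bad s)" if "\<not> termip red s" for s
    unfolding next_bad_def by (rule someI_ex) (use not_accp_down[OF that] in blast)
  define f where "f n = (next_bad ^^ n) t" for n
  have bad: "\<not> termip red (f n)" for n
  proof (induction n)
    case 0 show ?case using t by (metis f_def funpow_0 id_apply)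
  next
    case (Suc n) then show ?case using next_bad by (metis f_def funpow.simps(2) comp_apply)
  qed
  have "red (f n) (f (Suc n))" for n
    using next_bad[OF bad[of n]] by (metis f_def funpow.simps(2) comp_apply)
  moreover have "f 0 = t" by (simp add: f_def)
  ultimately show False using assms unfolding SN_def by blast
qed

lemma termip_imp_SN: "termip red t \<Longrightarrow> SN t"
proof (induction rule: accp_induct_rule)
  case (1 s)
  show ?case unfolding SN_def
  proof
    assume "\<exists>f. f 0 = s \<and> (\<forall>n. red (f n) (f (Suc n)))"
    then obtain f where f: "f 0 = s" "\<forall>n. red (f n) (f (Suc n))" by blast
    then have "SN (f (Suc 0))" using "1.IH" by force
    moreover have "\<exists>g. g 0 = f (Suc 0) \<and> (\<forall>n. red (g n) (g (Suc n)))"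
      using f by (intro exI[of _ "\<lambda>n. f (Suc n)"]) simp
    ultimately show False unfolding SN_def by blast
  qed
qed

lemma SN_iff_termip: "SN t \<longleftrightarrow> termip red t"
  using SN_imp_termip termip_imp_SN by blast

lemma SN_induct [consumes 1, case_names step]:
  assumes "SN t" and step: "\<And>t. SN t \<Longrightarrow> (\<And>t'. red t t' \<Longrightarrow> P t') \<Longrightarrow> P t"
  shows "P t"
proof -
  have "termip red t" using assms(1) by (simp add: SN_iff_termip)
  then show ?thesis
  proof (induction rule: accp_induct_rule)
    case (1 s)
    have "SN s" using "1.hyps" by (simp add: SN_iff_termip)
    then show ?case using "1.IH" by (rule step) simp
  qed
qed

lemma SN_intro: "(\<And>t'. red t t' \<Longrightarrow> SN t') \<Longrightarrow> SN t"
  unfolding SN_iff_termip by (rule accp.accI) (simp only: conversep_iff)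

lemma SN_red: "SN t \<Longrightarrow> red t t' \<Longrightarrow> SN t'"
  unfolding SN_iff_termip by (erule accp_downward) (simp only: conversep_iff)

lemma SN_context:
  assumes "SN (C t)" "\<And>s s'. red s s' \<Longrightarrow> red (C s) (C s')"
  shows "SN t"
  unfolding SN_def
proof
  assume "\<exists>f. f 0 = t \<and> (\<forall>n. red (f n) (f (Suc n)))"
  then obtain f where "f 0 = t" "\<forall>n. red (f n) (f (Suc n))" by blast
  then have "\<exists>g. g 0 = C t \<and> (\<forall>n. red (g n) (g (Suc n)))"
    using assms(2) by (intro exI[of _ "\<lambda>n. C (f n)"]) simp
  with assms(1) show False unfolding SN_def by blast
qed

section \<open>Turning a \<open>\<top>\<close>-variable back into the star\<close>

text \<open>\<open>var_to_star z\<close> undoes \<open>star_repl z\<close>. A reduction step of \<open>s\<close> is either mirrored by a step of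
  \<open>var_to_star z s\<close>, or it is a \<open>gentop\<close> step turning an occurrence of \<open>z\<^sup>\<top>\<close> into \<open>*\<^sup>\<top>\<close>; the latter
  kind strictly decreases the number of such occurrences. Hence \<open>s\<close> is SN whenever
  \<open>var_to_star z s\<close> is.\<close>

fun var_to_star :: "nat \<Rightarrow> tm \<Rightarrow> tm" where
  "var_to_star z Star = Star"
| "var_to_star z (FVar x a) = (if x = z \<and> a = Top then Star else FVar x a)"
| "var_to_star z (BVar i) = BVar i"
| "var_to_star z (Lam a t) = Lam a (var_to_star z t)"
| "var_to_star z (App t s) = App (var_to_star z t) (var_to_star z s)"
| "var_to_star z (Pair t s) = Pair (var_to_star z t) (var_to_star z s)"
| "var_to_star z (Proj1 t) = Proj1 (var_to_star z t)"
| "var_to_star z (Proj2 t) = Proj2 (var_to_star z t)"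
| "var_to_star z (TLam t) = TLam (var_to_star z t)"
| "var_to_star z (TApp t a) = TApp (var_to_star z t) a"

fun var_count :: "nat \<Rightarrow> tm \<Rightarrow> nat" where
  "var_count z Star = 0"
| "var_count z (FVar x a) = (if x = z \<and> a = Top then 1 else 0)"
| "var_count z (BVar i) = 0"
| "var_count z (Lam a t) = var_count z t"
| "var_count z (App t s) = var_count z t + var_count z s"
| "var_count z (Pair t s) = var_count z t + var_count z s"
| "var_count z (Proj1 t) = var_count z t"
| "var_count z (Proj2 t) = var_count z t"
| "var_count z (TLam t) = var_count z t"
| "var_count z (TApp t a) = var_count z t"

lemma var_to_star_opn: "var_to_star z (opn k u t) = opn k (var_to_star z u) (var_to_star z t)"
  by (induction t arbitrary: k) auto
lemma var_to_star_topn: "var_to_star z (topn k U t) = topn k U (var_to_star z t)"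
  by (induction t arbitrary: k) auto
lemma var_to_star_star_of [simp]: "var_to_star z (star_of \<tau>) = star_of \<tau>"
  by (induction \<tau>) auto
lemma var_count_star_of [simp]: "var_count z (star_of \<tau>) = 0"
  by (induction \<tau>) auto
lemma var_to_star_star_repl: "(z, Top) \<notin> fvars t \<Longrightarrow> var_to_star z (star_repl z t) = t"
  by (induction t) auto
lemma fvars_var_to_star: "fvars (var_to_star z t) = fvars t - {(z, Top)}"
  by (induction t) auto
lemma ftv_tm_var_to_star [simp]: "ftv_tm (var_to_star z t) = ftv_tm t"
  by (induction t) auto
lemma bvc_at_var_to_star [simp]: "bvc_at k (var_to_star z t) = bvc_at k t"
  by (induction t arbitrary: k) auto
lemma tyc_at_var_to_star [simp]: "tyc_at k (var_to_star z t) = tyc_at k t"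
  by (induction t arbitrary: k) auto
lemma var_to_star_id: "var_count z t = 0 \<Longrightarrow> var_to_star z t = t"
  by (induction t) auto
lemma var_count_opn: "var_count z u = 0 \<Longrightarrow> var_count z (opn k u t) = var_count z t"
  by (induction t arbitrary: k) auto
lemma var_count_topn [simp]: "var_count z (topn k U t) = var_count z t"
  by (induction t arbitrary: k) auto

lemma has_ty_var_to_star: "has_ty t A \<Longrightarrow> has_ty (var_to_star z t) A"
proof (induction rule: has_ty.induct)
  case (ty_Lam a t b)
  have "has_ty (opn 0 (FVar x a) (var_to_star z t)) b"
    if "x \<notin> {z}" "x \<notin> fst ` fvars (var_to_star z t)" for x
  proof -
    have "x \<notin> fst ` fvars t" using that unfolding fvars_var_to_star by force
    with ty_Lam.IH have "has_ty (var_to_star z (opn 0 (FVar x a) t)) b" by blast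
    with that show ?thesis by (simp add: var_to_star_opn)
  qed
  then show ?case using has_ty_Lam_cofinite[OF ty_Lam.hyps(1), of "{z}"] by simp
next
  case (ty_TLam t b)
  show ?case by (simp, rule has_ty.ty_TLam) (use ty_TLam.IH in \<open>auto simp: var_to_star_topn\<close>)
qed (auto intro: has_ty.intros)

definition var_to_star_sim :: "nat \<Rightarrow> tm \<Rightarrow> tm \<Rightarrow> bool" where
  "var_to_star_sim z s s' \<longleftrightarrow> red (var_to_star z s) (var_to_star z s') \<or>
     (var_to_star z s = var_to_star z s' \<and> var_count z s' < var_count z s)"

lemma var_to_star_sim_Lam:
  assumes x: "x \<notin> fst ` fvars t \<union> fst ` fvars t' \<union> {z}"
    and sim: "var_to_star_sim z (opn 0 (FVar x a) t) (opn 0 (FVar x a) t')"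
  shows "var_to_star_sim z (Lam a t) (Lam a t')"
proof -
  let ?u = "var_to_star z t" and ?u' = "var_to_star z t'"
  have fresh: "x \<notin> fst ` fvars ?u" "x \<notin> fst ` fvars ?u'"
    using x unfolding fvars_var_to_star by auto
  have "red (opn 0 (FVar x a) ?u) (opn 0 (FVar x a) ?u') \<or>
      (opn 0 (FVar x a) ?u = opn 0 (FVar x a) ?u' \<and> var_count z t' < var_count z t)"
    using sim x by (simp add: var_to_star_sim_def var_to_star_opn var_count_opn)
  then show ?thesis
    unfolding var_to_star_sim_def using red_LamI opn_FVar_inj[OF fresh] fresh by auto
qed

lemma var_to_star_sim_TLam:
  assumes "X \<notin> ftv_tm t \<union> ftv_tm t'"
    and "var_to_star_sim z (topn 0 (TFree X) t) (topn 0 (TFree X) t')"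
  shows "var_to_star_sim z (TLam t) (TLam t')"
  using assms red_TLamI[of X "var_to_star z t" "var_to_star z t'"]
    topn_TFree_inj[of X "var_to_star z t" "var_to_star z t'" 0]
  unfolding var_to_star_sim_def by (auto simp: var_to_star_topn)

lemma red_var_to_star_sim: "red s s' \<Longrightarrow> var_to_star_sim z s s'"
proof (induction rule: red.induct)
  case (gentop u \<tau>)
  show ?case
  proof (cases "var_to_star z u = star_of \<tau>")
    case True
    with gentop have "var_count z u \<noteq> 0" using var_to_star_id by force
    with True show ?thesis by (simp add: var_to_star_sim_def)
  next
    case False
    then show ?thesis
      using red.gentop[OF has_ty_var_to_star[OF gentop(1)] gentop(2)] by (simp add: var_to_star_sim_def)
  qed
next
  case (c_Lam t t' a)
  obtain x where "x \<notin> fst ` fvars t \<union> fst ` fvars t' \<union> {z}"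
    using obtain_fresh[of "fst ` fvars t \<union> fst ` fvars t' \<union> {z}"] by auto
  with c_Lam.IH show ?case by (intro var_to_star_sim_Lam) auto
next
  case (c_TLam t t')
  obtain X where "X \<notin> ftv_tm t \<union> ftv_tm t'" using obtain_fresh[of "ftv_tm t \<union> ftv_tm t'"] by auto
  with c_TLam.IH show ?case by (intro var_to_star_sim_TLam) auto
qed (auto simp: var_to_star_sim_def var_to_star_opn var_to_star_topn
    intro: red.intros has_ty_var_to_star)

lemma SN_of_var_to_star: "SN (var_to_star z s) \<Longrightarrow> SN s"
proof -
  have "SN u \<Longrightarrow> var_to_star z s = u \<Longrightarrow> SN s" for u
  proof (induction arbitrary: s rule: SN_induct)
    case (step u)
    show ?case using step.prems
    proof (induction "var_count z s" arbitrary: s rule: less_induct)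
      case less
      show ?case
      proof (rule SN_intro)
        fix s' assume "red s s'"
        then consider "red (var_to_star z s) (var_to_star z s')"
          | "var_to_star z s = var_to_star z s'" "var_count z s' < var_count z s"
          using red_var_to_star_sim unfolding var_to_star_sim_def by blast
        then show "SN s'"
        proof cases
          case 1 then show ?thesis using step.IH less.prems by blast
        next
          case 2 then show ?thesis using less.hyps less.prems by metis
        qed
      qed
    qed
  qed
  then show "SN (var_to_star z s) \<Longrightarrow> SN s" by blast
qed

lemma SN_star_repl: "SN t \<Longrightarrow> (z, Top) \<notin> fvars t \<Longrightarrow> SN (star_repl z t)"
  using SN_of_var_to_star var_to_star_star_repl by metis

text \<open>Conversely, \<open>star_repl z (var_to_star z s)\<close> reduces to \<open>s\<close> by turning back into \<open>*\<^sup>\<top>\<close> those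
  occurrences of \<open>z\<^sup>\<top>\<close> that stand for a \<open>*\<^sup>\<top>\<close> of \<open>s\<close>. \<open>some_var_to_star z q s\<close> says that \<open>s\<close> arises
  from \<open>q\<close> by turning some occurrences of \<open>z\<^sup>\<top>\<close> into \<open>*\<^sup>\<top>\<close>.\<close>

inductive some_var_to_star :: "nat \<Rightarrow> tm \<Rightarrow> tm \<Rightarrow> bool" for z where
  refl: "some_var_to_star z t t"
| var: "some_var_to_star z (FVar z Top) Star"
| Lam: "some_var_to_star z t t' \<Longrightarrow> some_var_to_star z (Lam a t) (Lam a t')"
| App: "some_var_to_star z t t' \<Longrightarrow> some_var_to_star z u u' \<Longrightarrow> some_var_to_star z (App t u) (App t' u')"
| Pair: "some_var_to_star z t t' \<Longrightarrow> some_var_to_star z u u' \<Longrightarrow> some_var_to_star z (Pair t u) (Pair t' u')"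
| Proj1: "some_var_to_star z t t' \<Longrightarrow> some_var_to_star z (Proj1 t) (Proj1 t')"
| Proj2: "some_var_to_star z t t' \<Longrightarrow> some_var_to_star z (Proj2 t) (Proj2 t')"
| TLam: "some_var_to_star z t t' \<Longrightarrow> some_var_to_star z (TLam t) (TLam t')"
| TApp: "some_var_to_star z t t' \<Longrightarrow> some_var_to_star z (TApp t U) (TApp t' U)"

inductive one_var_to_star :: "nat \<Rightarrow> tm \<Rightarrow> tm \<Rightarrow> bool" for z where
  var: "one_var_to_star z (FVar z Top) Star"
| Lam: "one_var_to_star z t t' \<Longrightarrow> one_var_to_star z (Lam a t) (Lam a t')"
| App1: "one_var_to_star z t t' \<Longrightarrow> one_var_to_star z (App t u) (App t' u)"
| App2: "one_var_to_star z u u' \<Longrightarrow> one_var_to_star z (App t u) (App t u')"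
| Pair1: "one_var_to_star z t t' \<Longrightarrow> one_var_to_star z (Pair t u) (Pair t' u)"
| Pair2: "one_var_to_star z u u' \<Longrightarrow> one_var_to_star z (Pair t u) (Pair t u')"
| Proj1: "one_var_to_star z t t' \<Longrightarrow> one_var_to_star z (Proj1 t) (Proj1 t')"
| Proj2: "one_var_to_star z t t' \<Longrightarrow> one_var_to_star z (Proj2 t) (Proj2 t')"
| TLam: "one_var_to_star z t t' \<Longrightarrow> one_var_to_star z (TLam t) (TLam t')"
| TApp: "one_var_to_star z t t' \<Longrightarrow> one_var_to_star z (TApp t U) (TApp t' U)"

lemma one_var_to_star_opn: "one_var_to_star z t t' \<Longrightarrow> one_var_to_star z (opn k u t) (opn k u t')"
  by (induction arbitrary: k rule: one_var_to_star.induct) (auto intro: one_var_to_star.intros)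
lemma one_var_to_star_topn: "one_var_to_star z t t' \<Longrightarrow> one_var_to_star z (topn k U t) (topn k U t')"
  by (induction arbitrary: k rule: one_var_to_star.induct) (auto intro: one_var_to_star.intros)

lemma one_var_to_star_red: "one_var_to_star z t t' \<Longrightarrow> red t t'"
proof (induction "size t" arbitrary: t t' rule: less_induct)
  case less
  from less.prems show ?case
  proof cases
    case var
    have "has_ty (FVar z Top) Top" by (rule has_ty.ty_FVar) simp
    then show ?thesis using red.gentop[of "FVar z Top" Top] var by simp
  next
    case (Lam b b' a)
    have "red (opn 0 (FVar x a) b) (opn 0 (FVar x a) b')" for x
      using less.hyps[of "opn 0 (FVar x a) b"] Lam by (simp add: one_var_to_star_opn)
    then show ?thesis using Lam by (simp add: red.c_Lam)
  next
    case (TLam b b')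
    have "red (topn 0 (TFree X) b) (topn 0 (TFree X) b')" for X
      using less.hyps[of "topn 0 (TFree X) b"] TLam by (simp add: one_var_to_star_topn)
    then show ?thesis using TLam by (simp add: red.c_TLam)
  qed (use less.hyps in \<open>auto intro: red.intros\<close>)
qed

lemma some_var_to_star_step:
  "some_var_to_star z q s \<Longrightarrow> q \<noteq> s \<Longrightarrow>
   \<exists>q'. one_var_to_star z q q' \<and> some_var_to_star z q' s \<and> var_count z q' < var_count z q"
proof (induction rule: some_var_to_star.induct)
  case (App t t' u u')
  show ?case
  proof (cases "t = t'")
    case True
    with App obtain u1 where "one_var_to_star z u u1" "some_var_to_star z u1 u'"
      "var_count z u1 < var_count z u" by auto
    with True App.hyps show ?thesis
      by (auto intro!: exI[of _ "App t u1"] intro: one_var_to_star.intros some_var_to_star.intros)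
  next
    case False
    with App obtain t1 where "one_var_to_star z t t1" "some_var_to_star z t1 t'"
      "var_count z t1 < var_count z t" by auto
    with App.hyps show ?thesis
      by (auto intro!: exI[of _ "App t1 u"] intro: one_var_to_star.intros some_var_to_star.intros)
  qed
next
  case (Pair t t' u u')
  show ?case
  proof (cases "t = t'")
    case True
    with Pair obtain u1 where "one_var_to_star z u u1" "some_var_to_star z u1 u'"
      "var_count z u1 < var_count z u" by auto
    with True Pair.hyps show ?thesis
      by (auto intro!: exI[of _ "Pair t u1"] intro: one_var_to_star.intros some_var_to_star.intros)
  next
    case False
    with Pair obtain t1 where "one_var_to_star z t t1" "some_var_to_star z t1 t'"
      "var_count z t1 < var_count z t" by auto
    with Pair.hyps show ?thesis
      by (auto intro!: exI[of _ "Pair t1 u"] intro: one_var_to_star.intros some_var_to_star.intros)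
  qed
qed (auto intro: one_var_to_star.intros some_var_to_star.intros)

lemma some_var_to_star_rtranclp: "some_var_to_star z q s \<Longrightarrow> red\<^sup>*\<^sup>* q s"
proof (induction "var_count z q" arbitrary: q rule: less_induct)
  case less
  show ?case
  proof (cases "q = s")
    case False
    then obtain q' where "one_var_to_star z q q'" "some_var_to_star z q' s" "var_count z q' < var_count z q"
      using some_var_to_star_step less.prems by blast
    then show ?thesis using less.hyps one_var_to_star_red by (blast intro: converse_rtranclp_into_rtranclp)
  qed simp
qed

lemma some_var_to_star_star_repl: "some_var_to_star z (star_repl z (var_to_star z s)) s"
  by (induction s) (auto intro: some_var_to_star.intros)
lemma some_var_to_star_var_to_star: "some_var_to_star z u (var_to_star z u)"
  by (induction u) (auto intro: some_var_to_star.intros)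

lemma star_repl_opn: "star_repl z (opn k u t) = opn k (star_repl z u) (star_repl z t)"
  by (induction t arbitrary: k) auto
lemma star_repl_topn: "star_repl z (topn k U t) = topn k U (star_repl z t)"
  by (induction t arbitrary: k) auto
lemma ftv_tm_star_repl [simp]: "ftv_tm (star_repl z t) = ftv_tm t"
  by (induction t) auto
lemma fvars_star_repl: "fvars t \<subseteq> fvars (star_repl z t)"
  by (induction t) auto

lemma has_ty_star_repl: "has_ty t A \<Longrightarrow> has_ty (star_repl z t) A"
proof (induction rule: has_ty.induct)
  case (ty_Lam a t b)
  have "has_ty (opn 0 (FVar x a) (star_repl z t)) b" if "x \<notin> fst ` fvars (star_repl z t)" for x
  proof -
    have "x \<notin> fst ` fvars t" using that fvars_star_repl[of t z] by blast
    with ty_Lam.IH have "has_ty (star_repl z (opn 0 (FVar x a) t)) b" by blast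
    then show ?thesis by (simp add: star_repl_opn)
  qed
  with ty_Lam.hyps show ?case by (auto intro: has_ty.ty_Lam)
next
  case (ty_TLam t b)
  show ?case by (simp, rule has_ty.ty_TLam) (use ty_TLam.IH in \<open>auto simp: star_repl_topn\<close>)
qed (auto intro: has_ty.intros)

section \<open>Reducibility candidates\<close>

lemma RC_has_ty: "RC A R \<Longrightarrow> t \<in> R \<Longrightarrow> has_ty t A"
  and RC_star_of: "RC A R \<Longrightarrow> iso A \<Longrightarrow> star_of A \<in> R"
  and RC_star_repl: "RC A R \<Longrightarrow> t \<in> R \<Longrightarrow> (z, Top) \<notin> fvars t \<Longrightarrow> star_repl z t \<in> R"
  and RC_SN: "RC A R \<Longrightarrow> t \<in> R \<Longrightarrow> SN t"
  and RC_red: "RC A R \<Longrightarrow> t \<in> R \<Longrightarrow> red t t' \<Longrightarrow> t' \<in> R"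
  and RC_neutral: "RC A R \<Longrightarrow> has_ty t A \<Longrightarrow> neutral t \<Longrightarrow> (\<And>t'. red t t' \<Longrightarrow> t' \<in> R) \<Longrightarrow> t \<in> R"
  unfolding RC_def variant_closed_def by blast+

lemma RCI:
  assumes "\<And>t. t \<in> R \<Longrightarrow> has_ty t A"
    and "iso A \<Longrightarrow> star_of A \<in> R"
    and "\<And>t z. t \<in> R \<Longrightarrow> (z, Top) \<notin> fvars t \<Longrightarrow> star_repl z t \<in> R"
    and "\<And>t. t \<in> R \<Longrightarrow> SN t"
    and "\<And>t t'. t \<in> R \<Longrightarrow> red t t' \<Longrightarrow> t' \<in> R"
    and "\<And>t. has_ty t A \<Longrightarrow> neutral t \<Longrightarrow> (\<And>t'. red t t' \<Longrightarrow> t' \<in> R) \<Longrightarrow> t \<in> R"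
  shows "RC A R"
  unfolding RC_def variant_closed_def using assms by blast

lemma RC_rtranclp:
  assumes "RC A R" "t \<in> R" "red\<^sup>*\<^sup>* t t'" shows "t' \<in> R"
  using assms(3,2) by (induction rule: rtranclp_induct) (auto intro: RC_red[OF assms(1)])

lemma RC_var_to_star: "RC A R \<Longrightarrow> u \<in> R \<Longrightarrow> var_to_star z u \<in> R"
  using RC_rtranclp some_var_to_star_rtranclp[OF some_var_to_star_var_to_star] by blast

lemma RC_of_var_to_star:
  assumes "RC A R" "var_to_star z s \<in> R"
  shows "s \<in> R"
proof -
  have "star_repl z (var_to_star z s) \<in> R"
    using RC_star_repl[OF assms] by (simp add: fvars_var_to_star)
  then show ?thesis
    using RC_rtranclp[OF assms(1)] some_var_to_star_rtranclp[OF some_var_to_star_star_repl] by blast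
qed

text \<open>Every \<open>gentop\<close>-reduct of a term of an RC's type lies in the RC.\<close>

lemma RC_star_of_of_has_ty:
  "RC A R \<Longrightarrow> has_ty t A \<Longrightarrow> has_ty t \<tau> \<Longrightarrow> iso \<tau> \<Longrightarrow> star_of \<tau> \<in> R"
  using has_ty_unique RC_star_of by metis

inductive_cases red_FVarE: "red (FVar x a) r"
inductive_cases red_AppE: "red (App t u) r"
inductive_cases red_Proj1E: "red (Proj1 t) r"
inductive_cases red_Proj2E: "red (Proj2 t) r"
inductive_cases red_TAppE: "red (TApp t U) r"

lemma RC_FVar: "RC A R \<Longrightarrow> is_type A \<Longrightarrow> FVar x A \<in> R"
  by (rule RC_neutral) (auto intro: has_ty.ty_FVar RC_star_of_of_has_ty elim: red_FVarE)

lemma RC_App: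
  assumes RA: "RC A RA" and RB: "RC B RB" and t: "has_ty t (Arr A B)" and u: "u \<in> RA"
    and reducts: "\<And>t'. red t t' \<Longrightarrow> \<forall>u\<in>RA. App t' u \<in> RB"
    and beta: "\<And>a b. t = Lam a b \<Longrightarrow> \<forall>u\<in>RA. opn 0 u b \<in> RB"
  shows "App t u \<in> RB"
  using RC_SN[OF RA u] u
proof (induction rule: SN_induct)
  case (step u)
  have ty: "has_ty (App t u) B" using t RC_has_ty[OF RA step.prems] by (rule has_ty.ty_App)
  show ?case
  proof (rule RC_neutral[OF RB ty])
    fix r assume "red (App t u) r"
    then show "r \<in> RB"
      by (cases rule: red_AppE)
        (use reducts beta step.prems step.IH RC_red[OF RA step.prems] RC_star_of_of_has_ty[OF RB ty]
          in blast)+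
  qed simp
qed

lemma RC_Proj1:
  assumes R: "RC A R" and t: "has_ty t (Prod A B)"
    and reducts: "\<And>t'. red t t' \<Longrightarrow> Proj1 t' \<in> R" and pair: "\<And>u v. t = Pair u v \<Longrightarrow> u \<in> R"
  shows "Proj1 t \<in> R"
proof (rule RC_neutral[OF R])
  show ty: "has_ty (Proj1 t) A" using t by (rule has_ty.ty_Proj1)
  fix r assume "red (Proj1 t) r"
  then show "r \<in> R" by (cases rule: red_Proj1E) (use reducts pair RC_star_of_of_has_ty[OF R ty] in blast)+
qed simp

lemma RC_Proj2:
  assumes R: "RC B R" and t: "has_ty t (Prod A B)"
    and reducts: "\<And>t'. red t t' \<Longrightarrow> Proj2 t' \<in> R" and pair: "\<And>u v. t = Pair u v \<Longrightarrow> v \<in> R"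
  shows "Proj2 t \<in> R"
proof (rule RC_neutral[OF R])
  show ty: "has_ty (Proj2 t) B" using t by (rule has_ty.ty_Proj2)
  fix r assume "red (Proj2 t) r"
  then show "r \<in> R" by (cases rule: red_Proj2E) (use reducts pair RC_star_of_of_has_ty[OF R ty] in blast)+
qed simp

lemma RC_TApp:
  assumes R: "RC (topen_at 0 p B) R" and t: "has_ty t (All B)" and p: "is_type p"
    and reducts: "\<And>t'. red t t' \<Longrightarrow> TApp t' p \<in> R" and beta: "\<And>b. t = TLam b \<Longrightarrow> topn 0 p b \<in> R"
  shows "TApp t p \<in> R"
proof (rule RC_neutral[OF R])
  show ty: "has_ty (TApp t p) (topen_at 0 p B)" using t p by (rule has_ty.ty_TApp)
  fix r assume "red (TApp t p) r"
  then show "r \<in> R" by (cases rule: red_TAppE) (use reducts beta RC_star_of_of_has_ty[OF R ty] in blast)+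
qed simp

lemma RC_Top: "RC Top {t. has_ty t Top \<and> SN t}"
proof (rule RCI)
  show "star_of Top \<in> {t. has_ty t Top \<and> SN t}"
    using star_of_normal[of Top] by (auto intro: has_ty.ty_Star SN_intro)
qed (auto intro: SN_intro has_ty_star_repl SN_star_repl subject_red SN_red)

lemma RC_Arr:
  assumes RA: "RC A RA" and RB: "RC B RB" and "is_type A" "is_type B"
  shows "RC (Arr A B) {t. has_ty t (Arr A B) \<and> (\<forall>u\<in>RA. App t u \<in> RB)}" (is "RC _ ?S")
proof (rule RCI)
  assume iso: "iso (Arr A B)"
  with assms have "has_ty (star_of (Arr A B)) (Arr A B)" "\<not> red (star_of (Arr A B)) t'" for t'
    by (simp_all add: has_ty_star_of star_of_normal del: star_of.simps)
  moreover have "star_of B \<in> RB" using iso RC_star_of[OF RB] by simp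
  ultimately show "star_of (Arr A B) \<in> ?S"
    by (auto intro: RC_App[OF RA RB])
next
  fix t z assume t: "t \<in> ?S" and z: "(z, Top) \<notin> fvars t"
  text \<open>\<open>App (star_repl z t) u\<close> is reached from \<open>App t (var_to_star z u) \<in> RB\<close> by variant closure
    followed by \<open>gentop\<close>-steps.\<close>
  have "App (star_repl z t) u \<in> RB" if "u \<in> RA" for u
    using RC_of_var_to_star[OF RB, of z] t RC_var_to_star[OF RA that] z
    by (simp add: var_to_star_star_repl)
  with t show "star_repl z t \<in> ?S" using has_ty_star_repl by blast
next
  fix t assume "t \<in> ?S"
  then have "App t (FVar 0 A) \<in> RB" using RC_FVar[OF RA \<open>is_type A\<close>] by blast
  then show "SN t" using RC_SN[OF RB] SN_context[of "\<lambda>s. App s (FVar 0 A)"] red.c_App1 by blast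
next
  fix t t' assume "t \<in> ?S" "red t t'"
  then show "t' \<in> ?S" using subject_red RC_red[OF RB] red.c_App1 by blast
next
  fix t assume "has_ty t (Arr A B)" "neutral t" "\<And>t'. red t t' \<Longrightarrow> t' \<in> ?S"
  then show "t \<in> ?S" by (auto intro: RC_App[OF RA RB])
qed blast

lemma RC_Prod:
  assumes RA: "RC A RA" and RB: "RC B RB" and "is_type A" "is_type B"
  shows "RC (Prod A B) {t. has_ty t (Prod A B) \<and> Proj1 t \<in> RA \<and> Proj2 t \<in> RB}" (is "RC _ ?S")
proof (rule RCI)
  assume iso: "iso (Prod A B)"
  with assms have "has_ty (star_of (Prod A B)) (Prod A B)" "\<not> red (star_of (Prod A B)) t'" for t'
    by (simp_all add: has_ty_star_of star_of_normal del: star_of.simps)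
  moreover have "star_of A \<in> RA" "star_of B \<in> RB" using iso RC_star_of[OF RA] RC_star_of[OF RB] by auto
  ultimately show "star_of (Prod A B) \<in> ?S"
    by (auto intro: RC_Proj1[OF RA] RC_Proj2[OF RB])
next
  fix t z assume "t \<in> ?S" "(z, Top) \<notin> fvars t"
  then show "star_repl z t \<in> ?S"
    using RC_star_repl[OF RA, of "Proj1 t" z] RC_star_repl[OF RB, of "Proj2 t" z] has_ty_star_repl
    by auto
next
  fix t assume "t \<in> ?S"
  then show "SN t" using RC_SN[OF RA] SN_context[of Proj1] red.c_Proj1 by blast
next
  fix t t' assume "t \<in> ?S" "red t t'"
  then show "t' \<in> ?S" using subject_red RC_red[OF RA] RC_red[OF RB] red.c_Proj1 red.c_Proj2 by blast
next
  fix t assume "has_ty t (Prod A B)" "neutral t" "\<And>t'. red t t' \<Longrightarrow> t' \<in> ?S"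
  then show "t \<in> ?S" by (auto intro: RC_Proj1[OF RA] RC_Proj2[OF RB])
qed blast

text \<open>\<open>F p S\<close> stands for the interpretation of the body with the bound type variable sent to \<open>p\<close>
  and \<open>S\<close>.\<close>

lemma RC_All:
  assumes "is_type (All B)"
    and RF: "\<And>p S. is_type p \<Longrightarrow> RC p S \<Longrightarrow> RC (topen_at 0 p B) (F p S)"
  shows "RC (All B) {t. has_ty t (All B) \<and> (\<forall>p S. is_type p \<longrightarrow> RC p S \<longrightarrow> TApp t p \<in> F p S)}"
    (is "RC _ ?S")
proof (rule RCI)
  assume iso: "iso (All B)"
  with assms have ty: "has_ty (star_of (All B)) (All B)" and nf: "\<not> red (star_of (All B)) t'" for t'
    by (simp_all add: has_ty_star_of star_of_normal del: star_of.simps)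
  have "TApp (star_of (All B)) p \<in> F p S" if p: "is_type p" "RC p S" for p S
  proof (rule RC_TApp[OF RF[OF p] ty p(1) nf[THEN notE]])
    fix b assume "star_of (All B) = TLam b"
    then show "topn 0 p b \<in> F p S"
      using iso RC_star_of[OF RF[OF p]] by (auto simp: topn_star_of iso_topen_at)
  qed
  with ty show "star_of (All B) \<in> ?S" by blast
next
  fix t z assume t: "t \<in> ?S" and z: "(z, Top) \<notin> fvars t"
  have "TApp (star_repl z t) p \<in> F p S" if p: "is_type p" "RC p S" for p S
    using RC_star_repl[OF RF[OF p], of "TApp t p" z] t z p by simp
  with t show "star_repl z t \<in> ?S" using has_ty_star_repl by blast
next
  fix t assume "t \<in> ?S"
  then have "TApp t Top \<in> F Top {t. has_ty t Top \<and> SN t}" using RC_Top by simp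
  then have "SN (TApp t Top)" using RC_SN[OF RF[OF _ RC_Top]] by simp
  then show "SN t" using SN_context[of "\<lambda>t. TApp t Top"] red.c_TApp by blast
next
  fix t t' assume t: "t \<in> ?S" and r: "red t t'"
  have "TApp t' p \<in> F p S" if p: "is_type p" "RC p S" for p S
    using t p RC_red[OF RF[OF p] _ red.c_TApp[OF r]] by blast
  with t r show "t' \<in> ?S" using subject_red by blast
next
  fix t assume t: "has_ty t (All B)" "neutral t" "\<And>t'. red t t' \<Longrightarrow> t' \<in> ?S"
  have "TApp t p \<in> F p S" if p: "is_type p" "RC p S" for p S
    by (rule RC_TApp[OF RF[OF p] t(1) p(1)]) (use t p in auto)
  with t show "t \<in> ?S" by blast
qed blast

section \<open>The interpretation is a reducibility candidate\<close>

lemma type_valued_map_of_zip: "\<forall>p\<in>set ps. is_type p \<Longrightarrow> type_valued (map_of (zip Xs ps))"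
  unfolding type_valued_def by (auto dest: map_of_SomeD set_zip_rightD)

lemma tsubst_topen_at_update:
  "s' Y = Some p \<Longrightarrow> \<forall>X\<in>ftv b. s' X = s X \<Longrightarrow> type_valued s \<Longrightarrow>
   tsubst s' (topen_at k (TFree Y) b) = topen_at k p (tsubst s b)"
proof (induction b arbitrary: k)
  case (TFree X)
  then show ?case by (cases "s X") (auto simp: type_valued_def)
qed auto

lemma simsubst_snoc_topen_at:
  assumes "length ps = length Xs" "Y \<notin> set Xs" "Y \<notin> ftv b" "type_valued (map_of (zip Xs ps))"
  shows "simsubst (Xs @ [Y]) (ps @ [p]) (topen_at 0 (TFree Y) b) = topen_at 0 p (simsubst Xs ps b)"
  unfolding simsubst_def
proof (rule tsubst_topen_at_update[OF _ _ assms(4)])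
  have none: "map_of (zip Xs ps) X = None" if "X \<notin> set Xs" for X
    using assms(1) that by (metis map_fst_zip map_of_eq_None_iff set_map)
  with assms(1-3) show "map_of (zip (Xs @ [Y]) (ps @ [p])) Y = Some p"
    and "\<forall>X\<in>ftv b. map_of (zip (Xs @ [Y]) (ps @ [p])) X = map_of (zip Xs ps) X"
    by (auto simp: zip_append map_add_def none split: option.splits)
qed

lemma fresh_tv_notin: "fresh_tv Xs ps b \<notin> set Xs" "fresh_tv Xs ps b \<notin> ftv b"
proof -
  let ?S = "insert 0 (set Xs \<union> \<Union> (ftv ` set ps) \<union> ftv b)"
  have "X < Suc (Max ?S)" if "X \<in> set Xs \<union> ftv b" for X
    using that by (intro le_imp_less_Suc Max_ge) auto
  then show "fresh_tv Xs ps b \<notin> set Xs" "fresh_tv Xs ps b \<notin> ftv b"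
    unfolding fresh_tv_def by auto
qed

definition RC_env :: "nat list \<Rightarrow> ty list \<Rightarrow> tm set list \<Rightarrow> bool" where
  "RC_env Xs ps Rs \<longleftrightarrow> distinct Xs \<and> length ps = length Xs \<and> length Rs = length Xs \<and>
     (\<forall>i < length Xs. is_type (ps ! i) \<and> RC (ps ! i) (Rs ! i))"

lemma RC_env_type_valued: "RC_env Xs ps Rs \<Longrightarrow> type_valued (map_of (zip Xs ps))"
  unfolding RC_env_def by (intro type_valued_map_of_zip) (metis in_set_conv_nth)

lemma RC_env_snoc:
  "RC_env Xs ps Rs \<Longrightarrow> Y \<notin> set Xs \<Longrightarrow> is_type p \<Longrightarrow> RC p S \<Longrightarrow>
   RC_env (Xs @ [Y]) (ps @ [p]) (Rs @ [S])"
  unfolding RC_env_def by (auto simp: nth_append less_Suc_eq)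

lemma RC_RED_TFree:
  assumes "RC_env Xs ps Rs" "X \<in> set Xs"
  shows "RC (simsubst Xs ps (TFree X)) (RED (TFree X) Xs ps Rs)"
proof -
  obtain i where i: "i < length Xs" "Xs ! i = X" using assms(2) by (auto simp: in_set_conv_nth)
  with assms(1) have "map_of (zip Xs ps) X = Some (ps ! i)" "map_of (zip Xs Rs) X = Some (Rs ! i)"
    and "RC (ps ! i) (Rs ! i)"
    unfolding RC_env_def using map_of_zip_nth[of Xs ps i] map_of_zip_nth[of Xs Rs i] by auto
  then show ?thesis by (simp add: simsubst_def)
qed

lemma RC_RED_All:
  fixes b :: ty and Xs :: "nat list" and ps :: "ty list" and Rs :: "tm set list"
  defines "Y \<equiv> fresh_tv Xs ps b"
  assumes "is_type (All b)" "ftv b \<subseteq> set Xs" and env: "RC_env Xs ps Rs"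
    and IH: "\<And>Xs' ps' Rs'. ftv (topen_at 0 (TFree Y) b) \<subseteq> set Xs' \<Longrightarrow> RC_env Xs' ps' Rs' \<Longrightarrow>
      RC (simsubst Xs' ps' (topen_at 0 (TFree Y) b)) (RED (topen_at 0 (TFree Y) b) Xs' ps' Rs')"
  shows "RC (simsubst Xs ps (All b)) (RED (All b) Xs ps Rs)"
proof -
  have Y: "Y \<notin> set Xs" "Y \<notin> ftv b" unfolding Y_def by (rule fresh_tv_notin)+
  have s: "type_valued (map_of (zip Xs ps))" using env by (rule RC_env_type_valued)
  have "RC (topen_at 0 p (simsubst Xs ps b)) (RED (topen_at 0 (TFree Y) b) (Xs @ [Y]) (ps @ [p]) (Rs @ [S]))"
    if "is_type p" "RC p S" for p S
  proof -
    have "ftv (topen_at 0 (TFree Y) b) \<subseteq> set (Xs @ [Y])"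
      using ftv_topen_at_subset[of 0 "TFree Y" b] assms(3) by auto
    then have "RC (simsubst (Xs @ [Y]) (ps @ [p]) (topen_at 0 (TFree Y) b))
        (RED (topen_at 0 (TFree Y) b) (Xs @ [Y]) (ps @ [p]) (Rs @ [S]))"
      using IH RC_env_snoc[OF env Y(1) that] by blast
    moreover have "length ps = length Xs" using env by (simp add: RC_env_def)
    ultimately show ?thesis using simsubst_snoc_topen_at[OF _ Y s] by simp
  qed
  moreover have "is_type (All (simsubst Xs ps b))"
    using lc_ty_at_tsubst[of 1 b, OF _ s] assms(2) by (simp add: simsubst_def)
  ultimately show ?thesis
    using RC_All[of "simsubst Xs ps b"] by (simp add: simsubst_def Y_def)
qed

lemma RC_RED:
  "is_type phi \<Longrightarrow> ftv phi \<subseteq> set Xs \<Longrightarrow> RC_env Xs ps Rs \<Longrightarrow>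
   RC (simsubst Xs ps phi) (RED phi Xs ps Rs)"
proof (induction "size phi" arbitrary: phi Xs ps Rs rule: less_induct)
  case less
  have types: "is_type (simsubst Xs ps c)" if "is_type c" for c
    using lc_ty_at_tsubst[OF that RC_env_type_valued[OF less.prems(3)]] by (simp add: simsubst_def)
  show ?case
  proof (cases phi)
    case Top
    then show ?thesis using RC_Top by (simp add: simsubst_def)
  next
    case (TFree X)
    then show ?thesis using RC_RED_TFree less.prems(2,3) by simp
  next
    case (Prod a b)
    with less show ?thesis using RC_Prod[of _ "RED a Xs ps Rs" _ "RED b Xs ps Rs"] types
      by (simp add: simsubst_def)
  next
    case (Arr a b)
    with less show ?thesis using RC_Arr[of _ "RED a Xs ps Rs" _ "RED b Xs ps Rs"] types
      by (simp add: simsubst_def)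
  next
    case (All b)
    let ?b = "topen_at 0 (TFree (fresh_tv Xs ps b)) b"
    have "size ?b < size phi" "is_type ?b" using less.prems(1) All by (auto intro: lc_ty_at_topen)
    with less.prems show ?thesis unfolding All by (intro RC_RED_All less.hyps) (auto simp: All)
  qed (use less.prems in simp)
qed

theorem mainTheorem13:
  fixes phi :: ty and Xs :: "nat list" and ps :: "ty list" and Rs :: "tm set list"
  assumes "is_type phi"
    and "distinct Xs"
    and "ftv phi \<subseteq> set Xs"
    and "length ps = length Xs"
    and "length Rs = length Xs"
    and "\<forall>i < length Xs. is_type (ps ! i) \<and> RC (ps ! i) (Rs ! i)"
  shows "RC (simsubst Xs ps phi) (RED phi Xs ps Rs)"
  using RC_RED assms unfolding RC_env_def by blast

end
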